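(* Let $n\geq 3$ be an integer. Then for every $n$-vertex unicyclic graph $G$, $$n(US_n)\geq n(G)\geq n(UP_n).$$
   Context: A unicyclic graph is a connected graph containing exactly one cycle. A subtree of a graph $G$ is a subgraph of $G$ (a vertex set together with an edge set) that is a tree; two subtrees are different if they differ as subgraphs. $n(G)$ denotes the number of subtrees of $G$, where by convention the empty subtree is also counted (so there is exactly one subtree with $0$ vertices). $S_n$ is the $n$-vertex star and $P_n$ the $n$-vertex path. $US_n$ is the unicyclic graph obtained from $S_n$ by adding an edge joining two of its leaves. $UP_n$ is the unicyclic graph obtained by identifying a vertex of the triangle $C_3$ with an end vertex of $P_{n-2}$. *)

theory Defs
  imports Main
begin

definition simple_graph :: "'a set \<Rightarrow> 'a set set \<Rightarrow> bool" where
  "simple_graph V E \<longleftrightarrow> finite V \<and> (\<forall>e\<in>E. e \<subseteq> V \<and> card e = 2)"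

definition adj_rel :: "'a set set \<Rightarrow> ('a \<times> 'a) set" where
  "adj_rel E = {(x, y). {x, y} \<in> E}"

definition connected_graph :: "'a set \<Rightarrow> 'a set set \<Rightarrow> bool" where
  "connected_graph V E \<longleftrightarrow> V \<noteq> {} \<and> (\<forall>u\<in>V. \<forall>v\<in>V. (u, v) \<in> (adj_rel E)\<^sup>*)"

definition is_cycle :: "'a set set \<Rightarrow> 'a set set \<Rightarrow> bool" where
  "is_cycle E C \<longleftrightarrow> C \<noteq> {} \<and> C \<subseteq> E \<and> finite C \<and> connected_graph (\<Union>C) C \<and>
     (\<forall>v\<in>\<Union>C. card {e\<in>C. v \<in> e} = 2)"

definition is_tree :: "'a set \<Rightarrow> 'a set set \<Rightarrow> bool" where
  "is_tree V E \<longleftrightarrow> simple_graph V E \<and> connected_graph V E \<and> \<not> (\<exists>C. is_cycle E C)"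

definition unicyclic :: "'a set \<Rightarrow> 'a set set \<Rightarrow> bool" where
  "unicyclic V E \<longleftrightarrow> simple_graph V E \<and> connected_graph V E \<and> (\<exists>!C. is_cycle E C)"

definition subtrees :: "'a set \<Rightarrow> 'a set set \<Rightarrow> ('a set \<times> 'a set set) set" where
  "subtrees V E = {(W, F). W \<subseteq> V \<and> F \<subseteq> E \<and> ((W = {} \<and> F = {}) \<or> is_tree W F)}"

definition num_subtrees :: "'a set \<Rightarrow> 'a set set \<Rightarrow> nat" where
  "num_subtrees V E = card (subtrees V E)"

text \<open>US_n on vertices 0..n-1: star with centre 0, plus the edge {1,2}.\<close>
definition US_V :: "nat \<Rightarrow> nat set" where "US_V n = {0..<n}"
definition US_E :: "nat \<Rightarrow> nat set set" where
  "US_E n = {{0, i} | i. 1 \<le> i \<and> i < n} \<union> {{1, 2}}"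

text \<open>UP_n on vertices 0..n-1: triangle 0,1,2 with the path 2-3-...-(n-1) attached at 2.\<close>
definition UP_V :: "nat \<Rightarrow> nat set" where "UP_V n = {0..<n}"
definition UP_E :: "nat \<Rightarrow> nat set set" where
  "UP_E n = {{0, 1}, {1, 2}, {0, 2}} \<union> {{i, i + 1} | i. 2 \<le> i \<and> i + 1 < n}"

end

theory Submission
  imports Defs
begin

text \<open>Deleting a leaf \<open>v\<close> with neighbour \<open>u\<close> from \<open>G\<close> gives
  \<open>n(G) = n(G - v) + 1 + n\<^sub>u(G - v)\<close>, where \<open>n\<^sub>x\<close> counts the subtrees containing \<open>x\<close>, and
  \<open>n\<^sub>x(G) = n\<^sub>x(G - v) + #{subtrees of G - v containing u and x}\<close> for \<open>x \<noteq> v\<close>.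
  A unicyclic graph without leaves is a cycle \<open>C\<^sub>k\<close>; deleting a vertex of \<open>C\<^sub>k\<close> leaves a path,
  and contracting one of its edges gives \<open>C\<^sub>k\<^sub>-\<^sub>1\<close>, whence \<open>n(C\<^sub>k) = k\<^sup>2 + 1\<close> and
  \<open>2 n\<^sub>x(C\<^sub>k) = k\<^sup>2 + k\<close>. An induction over leaf deletions then maintains the lower bounds
  \<open>2 n(G) + 10 \<ge> N\<^sup>2 + 7N\<close>, \<open>n\<^sub>x(G) \<ge> N + 3\<close> and the upper bounds \<open>n(G) \<le> 3\<cdot>2\<^sup>N\<^sup>-\<^sup>2 + N + 1\<close>,
  \<open>n\<^sub>x(G) \<le> 3\<cdot>2\<^sup>N\<^sup>-\<^sup>2\<close> (the lower bound on \<open>n\<^sub>x\<close> needs a spanning tree of \<open>G - v\<close>, which contains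
  both \<open>u\<close> and \<open>x\<close>). The leaf recursion, started at the triangle, shows that \<open>UP\<^sub>N\<close> and \<open>US\<^sub>N\<close>
  attain these bounds.\<close>

definition deg :: "'a set set \<Rightarrow> 'a \<Rightarrow> nat" where
  "deg E x = card {e\<in>E. x \<in> e}"

definition del_vertex :: "'a set set \<Rightarrow> 'a \<Rightarrow> 'a set set" where
  "del_vertex E v = {e\<in>E. v \<notin> e}"

definition num_subtrees_at :: "'a set \<Rightarrow> 'a set set \<Rightarrow> 'a \<Rightarrow> nat" where
  "num_subtrees_at V E x = card {p\<in>subtrees V E. x \<in> fst p}"

lemma adj_rel_iff [simp]: "(x, y) \<in> adj_rel E \<longleftrightarrow> {x, y} \<in> E"
  by (simp add: adj_rel_def)

lemma adj_rtrancl_sym: "(x, y) \<in> (adj_rel E)\<^sup>* \<Longrightarrow> (y, x) \<in> (adj_rel E)\<^sup>*"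
proof (induction rule: rtrancl_induct)
  case (step y z)
  then have "(z, y) \<in> adj_rel E" by (simp add: insert_commute)
  then show ?case using step(3) by (meson converse_rtrancl_into_rtrancl)
qed simp

lemma adj_rtrancl_edge: "{x, y} \<in> E \<Longrightarrow> (x, y) \<in> (adj_rel E)\<^sup>*"
  by (simp add: r_into_rtrancl)

lemma adj_rtrancl_map:
  assumes "(x, y) \<in> (adj_rel F)\<^sup>*"
    and "\<And>a b. {a, b} \<in> F \<Longrightarrow> (g a, g b) \<in> (adj_rel F')\<^sup>*"
  shows "(g x, g y) \<in> (adj_rel F')\<^sup>*"
  using assms(1)
proof (induction rule: rtrancl_induct)
  case (step y z)
  then show ?case using assms(2)[of y z] by (meson adj_rel_iff rtrancl_trans)
qed simp

lemma adj_rtrancl_mono: "F \<subseteq> F' \<Longrightarrow> (x, y) \<in> (adj_rel F)\<^sup>* \<Longrightarrow> (x, y) \<in> (adj_rel F')\<^sup>*"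
  using adj_rtrancl_map[of x y F id F'] by (simp add: adj_rtrancl_edge subset_iff)

lemma adj_rtrancl_first_edge:
  "(x, y) \<in> (adj_rel F)\<^sup>* \<Longrightarrow> x \<noteq> y \<Longrightarrow> \<exists>z. {x, z} \<in> F"
  by (induction rule: converse_rtrancl_induct) auto

lemma connected_graphI_hub:
  assumes "h \<in> V" and "\<And>x. x \<in> V \<Longrightarrow> (h, x) \<in> (adj_rel E)\<^sup>*"
  shows "connected_graph V E"
  unfolding connected_graph_def
proof (intro conjI ballI)
  fix x y assume "x \<in> V" "y \<in> V"
  then show "(x, y) \<in> (adj_rel E)\<^sup>*"
    using rtrancl_trans[OF adj_rtrancl_sym[OF assms(2)] assms(2)] by blast
qed (use assms(1) in auto)

lemma connected_graph_subst_edges: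
  assumes "connected_graph V E" and "\<And>p q. {p, q} \<in> E \<Longrightarrow> (p, q) \<in> (adj_rel E')\<^sup>*"
  shows "connected_graph V E'"
  unfolding connected_graph_def
proof (intro conjI ballI)
  fix x y assume "x \<in> V" "y \<in> V"
  then have "(x, y) \<in> (adj_rel E)\<^sup>*" using assms(1) unfolding connected_graph_def by blast
  then show "(x, y) \<in> (adj_rel E')\<^sup>*" using adj_rtrancl_map[of x y E id E'] assms(2) by simp
qed (use assms(1) in \<open>simp add: connected_graph_def\<close>)

lemma connected_graph_mono: "connected_graph V E \<Longrightarrow> E \<subseteq> E' \<Longrightarrow> connected_graph V E'"
  by (rule connected_graph_subst_edges) (auto intro: adj_rtrancl_edge)

lemma connected_graph_insert_vertex:
  assumes "connected_graph W F" and "u \<in> W" and "{u, v} \<in> F"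
  shows "connected_graph (insert v W) F"
proof (rule connected_graphI_hub)
  fix x assume "x \<in> insert v W"
  then show "(u, x) \<in> (adj_rel F)\<^sup>*"
    using assms unfolding connected_graph_def by (auto intro: adj_rtrancl_edge)
qed (use assms(2) in simp)

lemma connected_graph_subdivide_edge:
  assumes "connected_graph W F" "F - {{a, b}} \<subseteq> F'" "{a, v} \<in> F'" "{v, b} \<in> F'"
  shows "connected_graph W F'"
proof (rule connected_graph_subst_edges[OF assms(1)])
  fix p q assume pq: "{p, q} \<in> F"
  show "(p, q) \<in> (adj_rel F')\<^sup>*"
  proof (cases "{p, q} = {a, b}")
    case True
    have "(a, v) \<in> adj_rel F'" "(v, b) \<in> adj_rel F'" using assms(3,4) by auto
    then have "(a, b) \<in> (adj_rel F')\<^sup>*" by (meson rtrancl.rtrancl_into_rtrancl r_into_rtrancl)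
    moreover have "(p = a \<and> q = b) \<or> (p = b \<and> q = a)" using True by (auto simp: doubleton_eq_iff)
    ultimately show ?thesis using adj_rtrancl_sym by auto
  next
    case False
    then show ?thesis using pq assms(2) by (simp add: adj_rtrancl_edge subset_iff)
  qed
qed

lemma connected_graph_identify_vertex:
  assumes "connected_graph W F" and "u \<in> W" and "u \<noteq> v"
    and "\<And>p q. {p, q} \<in> F \<Longrightarrow>
           ((if p = v then u else p), (if q = v then u else q)) \<in> (adj_rel F')\<^sup>*"
  shows "connected_graph (W - {v}) F'"
  unfolding connected_graph_def
proof (intro conjI ballI)
  show "W - {v} \<noteq> {}" using assms(2,3) by auto
next
  fix x y assume "x \<in> W - {v}" "y \<in> W - {v}"
  moreover have "(x, y) \<in> (adj_rel F)\<^sup>*" using assms(1) calculation unfolding connected_graph_def by auto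
  ultimately show "(x, y) \<in> (adj_rel F')\<^sup>*"
    using adj_rtrancl_map[of x y F "\<lambda>z. if z = v then u else z" F'] assms(4) by auto
qed

lemma connected_graph_del_leaf:
  assumes "connected_graph W F" "u \<in> W" "u \<noteq> v" "{e\<in>F. v \<in> e} \<subseteq> {{u, v}}"
  shows "connected_graph (W - {v}) (del_vertex F v)"
proof (rule connected_graph_identify_vertex[OF assms(1-3)])
  fix p q assume pq: "{p, q} \<in> F"
  show "((if p = v then u else p), (if q = v then u else q)) \<in> (adj_rel (del_vertex F v))\<^sup>*"
  proof (cases "v \<in> {p, q}")
    case True
    then have "{p, q} = {u, v}" using pq assms(4) by blast
    then have "(p = u \<and> q = v) \<or> (p = v \<and> q = u)" by (simp add: doubleton_eq_iff)
    then show ?thesis by auto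
  next
    case False
    then have "{p, q} \<in> del_vertex F v" "p \<noteq> v" "q \<noteq> v" using pq unfolding del_vertex_def by auto
    then show ?thesis by (simp add: adj_rtrancl_edge)
  qed
qed

lemma card_2_elem_obtain:
  assumes "card e = 2" "v \<in> e"
  obtains a where "a \<noteq> v" "e = {v, a}"
proof -
  from assms(1) obtain x y where e: "e = {x, y}" "x \<noteq> y" by (auto simp: card_2_iff)
  show ?thesis
  proof (cases "v = x")
    case True
    show ?thesis by (rule that[of y]) (use e True in auto)
  next
    case False
    then have "v = y" using assms(2) e by blast
    show ?thesis by (rule that[of x]) (use e \<open>v = y\<close> in \<open>auto simp: insert_commute\<close>)
  qed
qed

lemma simple_graph_finite_edges: "simple_graph V E \<Longrightarrow> finite E"
  unfolding simple_graph_def by (meson Pow_iff finite_Pow_iff finite_subset subsetI)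

lemma simple_graph_mono: "simple_graph V E \<Longrightarrow> F \<subseteq> E \<Longrightarrow> simple_graph V F"
  unfolding simple_graph_def by auto

lemma finite_subtrees: "simple_graph V E \<Longrightarrow> finite (subtrees V E)"
proof -
  assume s: "simple_graph V E"
  have "subtrees V E \<subseteq> Pow V \<times> Pow E" unfolding subtrees_def by auto
  moreover have "finite (Pow V \<times> Pow E)"
    using s simple_graph_finite_edges[OF s] unfolding simple_graph_def by auto
  ultimately show ?thesis by (rule finite_subset)
qed

lemma is_cycle_mono: "is_cycle F C \<Longrightarrow> F \<subseteq> F' \<Longrightarrow> is_cycle F' C"
  unfolding is_cycle_def by auto

lemma is_cycle_restrict: "is_cycle F C \<Longrightarrow> C \<subseteq> F' \<Longrightarrow> is_cycle F' C"
  unfolding is_cycle_def by auto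

lemma is_cycle_avoids_leaf:
  assumes "is_cycle F C" and "{e\<in>F. v \<in> e} \<subseteq> {e0}" and "e \<in> C"
  shows "v \<notin> e"
proof
  assume "v \<in> e"
  then have "card {e\<in>C. v \<in> e} = 2" using assms(1,3) unfolding is_cycle_def by auto
  moreover have "{e\<in>C. v \<in> e} \<subseteq> {e0}" using assms(1,2) unfolding is_cycle_def by auto
  then have "card {e\<in>C. v \<in> e} \<le> 1" by (metis card.empty card.insert card_mono finite.emptyI finite.insertI empty_iff One_nat_def)
  ultimately show False by simp
qed

lemma is_tree_singleton: "is_tree {x} {}"
  unfolding is_tree_def simple_graph_def connected_graph_def is_cycle_def by auto

lemma is_tree_edge_subset: "is_tree W F \<Longrightarrow> e \<in> F \<Longrightarrow> e \<subseteq> W"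
  unfolding is_tree_def simple_graph_def by auto

lemma is_tree_nonempty: "is_tree W F \<Longrightarrow> W \<noteq> {}"
  unfolding is_tree_def connected_graph_def by auto

lemma is_tree_singleton_edges: "is_tree {v} F \<Longrightarrow> F = {}"
proof (rule ccontr)
  assume t: "is_tree {v} F" and "F \<noteq> {}"
  then obtain e where "e \<in> F" by auto
  then have "e \<subseteq> {v}" "card e = 2" using t unfolding is_tree_def simple_graph_def by auto
  then have "card e \<le> card {v}" by (intro card_mono) auto
  then show False using \<open>card e = 2\<close> by simp
qed

lemma tree_has_no_cycle: "is_tree W F \<Longrightarrow> \<not> is_cycle F C"
  unfolding is_tree_def by blast

lemma tree_add_leaf:
  assumes t: "is_tree W F" and u: "u \<in> W" and v: "v \<notin> W"
  shows "is_tree (insert v W) (insert {u, v} F)"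
proof -
  have s: "simple_graph W F" and c: "connected_graph W F" and nc: "\<not> (\<exists>C. is_cycle F C)"
    using t unfolding is_tree_def by auto
  have "u \<noteq> v" using u v by auto
  then have s': "simple_graph (insert v W) (insert {u, v} F)"
    using s u unfolding simple_graph_def by auto
  have "connected_graph W (insert {u, v} F)"
    by (rule connected_graph_mono[OF c]) auto
  then have c': "connected_graph (insert v W) (insert {u, v} F)"
    by (rule connected_graph_insert_vertex[OF _ u]) simp
  have "\<not> is_cycle (insert {u, v} F) C" for C
  proof
    assume C: "is_cycle (insert {u, v} F) C"
    have "{e\<in>insert {u, v} F. v \<in> e} \<subseteq> {{u, v}}" using s v unfolding simple_graph_def by auto
    then have "v \<notin> e" if "e \<in> C" for e using is_cycle_avoids_leaf[OF C _ that] by blast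
    moreover have "C \<subseteq> insert {u, v} F" using C unfolding is_cycle_def by simp
    ultimately have "C \<subseteq> F" by auto
    then show False using is_cycle_restrict[OF C] nc by blast
  qed
  then show ?thesis using s' c' unfolding is_tree_def by auto
qed

lemma is_tree_two_edges:
  assumes "x \<noteq> y" "x \<noteq> z" "y \<noteq> z"
  shows "is_tree {x, y, z} {{x, y}, {x, z}}"
proof -
  have "is_tree (insert y {x}) (insert {x, y} {})"
    by (rule tree_add_leaf[OF is_tree_singleton]) (use assms in auto)
  then have "is_tree (insert z {y, x}) (insert {x, z} {{x, y}})"
    by (rule tree_add_leaf) (use assms in auto)
  then show ?thesis by (simp add: insert_commute)
qed

lemma tree_del_leaf:
  assumes t: "is_tree W F" and v: "v \<in> W" and W: "W \<noteq> {v}"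
    and leaf: "{e\<in>F. v \<in> e} \<subseteq> {{u, v}}" and uv: "u \<noteq> v"
  shows "{u, v} \<in> F" "u \<in> W" "is_tree (W - {v}) (F - {{u, v}})"
proof -
  have s: "simple_graph W F" and c: "connected_graph W F" and nc: "\<not> (\<exists>C. is_cycle F C)"
    using t unfolding is_tree_def by auto
  obtain w where "w \<in> W" "w \<noteq> v" using W v by auto
  then have "(v, w) \<in> (adj_rel F)\<^sup>*" using c v unfolding connected_graph_def by auto
  then obtain z where "{v, z} \<in> F" using adj_rtrancl_first_edge \<open>w \<noteq> v\<close> by metis
  then show uvF: "{u, v} \<in> F" using leaf by auto
  then show uW: "u \<in> W" using s unfolding simple_graph_def by auto
  have "del_vertex F v = F - {{u, v}}" using leaf uvF unfolding del_vertex_def by auto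
  then have "connected_graph (W - {v}) (F - {{u, v}})"
    using connected_graph_del_leaf[OF c uW uv leaf] by simp
  moreover have "simple_graph (W - {v}) (F - {{u, v}})"
    using s leaf unfolding simple_graph_def by auto
  moreover have "\<not> (\<exists>C. is_cycle (F - {{u, v}}) C)"
    using nc is_cycle_mono by (metis Diff_subset)
  ultimately show "is_tree (W - {v}) (F - {{u, v}})" unfolding is_tree_def by auto
qed

section \<open>Counting subtrees by deleting a vertex or a leaf\<close>

lemma subtrees_del_vertex:
  "{p\<in>subtrees V E. v \<notin> fst p} = subtrees (V - {v}) (del_vertex E v)"
proof (intro set_eqI iffI)
  fix p assume p: "p \<in> {p\<in>subtrees V E. v \<notin> fst p}"
  obtain W F where pWF: "p = (W, F)" by fastforce
  have "W \<subseteq> V" "F \<subseteq> E" "(W = {} \<and> F = {}) \<or> is_tree W F" "v \<notin> W"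
    using p pWF unfolding subtrees_def by auto
  moreover from calculation have "F \<subseteq> del_vertex E v"
    using is_tree_edge_subset unfolding del_vertex_def by blast
  ultimately show "p \<in> subtrees (V - {v}) (del_vertex E v)" using pWF unfolding subtrees_def by auto
qed (auto simp: subtrees_def del_vertex_def)

lemma subtrees_del_edge: "subtrees V (E - {e}) = {p\<in>subtrees V E. e \<notin> snd p}"
  unfolding subtrees_def by auto

lemma card_filter_partition:
  assumes "finite A"
  shows "card A = card {x\<in>A. \<not> P x} + card {x\<in>A. P x}"
proof -
  have "A = {x\<in>A. \<not> P x} \<union> {x\<in>A. P x}" by auto
  then show ?thesis using assms by (metis (no_types, lifting) card_Un_disjoint disjoint_iff finite_Un mem_Collect_eq)
qed

lemma num_subtrees_split_vertex:
  "simple_graph V E \<Longrightarrow>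
    num_subtrees V E = num_subtrees (V - {v}) (del_vertex E v) + num_subtrees_at V E v"
  unfolding num_subtrees_def num_subtrees_at_def
  using card_filter_partition[OF finite_subtrees, of V E "\<lambda>p. v \<in> fst p"] subtrees_del_vertex[of V E v]
  by simp

lemma num_subtrees_split_edge:
  "simple_graph V E \<Longrightarrow>
    num_subtrees V E = num_subtrees V (E - {e}) + card {p\<in>subtrees V E. e \<in> snd p}"
  unfolding num_subtrees_def
  using card_filter_partition[OF finite_subtrees, of V E "\<lambda>p. e \<in> snd p"] subtrees_del_edge[of V E e]
  by simp

definition attach_leaf :: "'a \<Rightarrow> 'a \<Rightarrow> 'a set \<times> 'a set set \<Rightarrow> 'a set \<times> 'a set set" where
  "attach_leaf u v p = (insert v (fst p), insert {u, v} (snd p))"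

lemma inj_on_attach_leaf: "inj_on (attach_leaf u v) (subtrees (V - {v}) (del_vertex E v))"
proof (rule inj_onI)
  fix p q assume "p \<in> subtrees (V - {v}) (del_vertex E v)" "q \<in> subtrees (V - {v}) (del_vertex E v)"
    and e: "attach_leaf u v p = attach_leaf u v q"
  then have "v \<notin> fst p" "v \<notin> fst q" "{u, v} \<notin> snd p" "{u, v} \<notin> snd q"
    unfolding subtrees_def del_vertex_def by auto
  then have "fst p = fst q" "snd p = snd q" using e unfolding attach_leaf_def
    by (metis Pair_inject insert_ident)+
  then show "p = q" by (simp add: prod_eq_iff)
qed

lemma attach_leaf_in_subtrees:
  assumes p: "p \<in> subtrees (V - {v}) (del_vertex E v)" and u: "u \<in> fst p"
    and v: "v \<in> V" and uv: "{u, v} \<in> E"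
  shows "attach_leaf u v p \<in> subtrees V E"
proof -
  obtain W F where pWF: "p = (W, F)" by fastforce
  have W: "W \<subseteq> V - {v}" "F \<subseteq> del_vertex E v" "is_tree W F"
    using p u pWF unfolding subtrees_def by auto
  have "is_tree (insert v W) (insert {u, v} F)" using tree_add_leaf[OF W(3)] u pWF W(1) by auto
  moreover have "insert {u, v} F \<subseteq> E" using W(2) uv unfolding del_vertex_def by blast
  ultimately show ?thesis using pWF W(1) v unfolding subtrees_def attach_leaf_def by auto
qed

lemma subtrees_at_leaf:
  assumes v: "v \<in> V" and u: "u \<noteq> v" and leaf: "{e\<in>E. v \<in> e} = {{u, v}}"
  shows "{p\<in>subtrees V E. v \<in> fst p} =
         insert ({v}, {}) (attach_leaf u v ` {p\<in>subtrees (V - {v}) (del_vertex E v). u \<in> fst p})"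
proof (intro set_eqI iffI)
  fix p assume p: "p \<in> {p\<in>subtrees V E. v \<in> fst p}"
  obtain W F where pWF: "p = (W, F)" by fastforce
  have WF: "W \<subseteq> V" "F \<subseteq> E" "is_tree W F" "v \<in> W"
    using p pWF unfolding subtrees_def by auto
  have leafF: "{e\<in>F. v \<in> e} \<subseteq> {{u, v}}" using leaf WF(2) by blast
  show "p \<in> insert ({v}, {}) (attach_leaf u v ` {p\<in>subtrees (V - {v}) (del_vertex E v). u \<in> fst p})"
  proof (cases "W = {v}")
    case True
    then show ?thesis using is_tree_singleton_edges[of v F] WF(3) pWF by auto
  next
    case False
    note del = tree_del_leaf[OF WF(3) WF(4) False leafF u]
    have "F - {{u, v}} \<subseteq> del_vertex E v" using WF(2) leafF unfolding del_vertex_def by auto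
    then have "(W - {v}, F - {{u, v}}) \<in> {p\<in>subtrees (V - {v}) (del_vertex E v). u \<in> fst p}"
      using del(2,3) u WF(1) unfolding subtrees_def by auto
    moreover have "attach_leaf u v (W - {v}, F - {{u, v}}) = p"
      unfolding attach_leaf_def using pWF del(1) WF(4) by auto
    ultimately show ?thesis by blast
  qed
next
  fix p assume p: "p \<in> insert ({v}, {}) (attach_leaf u v ` {p\<in>subtrees (V - {v}) (del_vertex E v). u \<in> fst p})"
  show "p \<in> {p\<in>subtrees V E. v \<in> fst p}"
  proof (cases "p = ({v}, {})")
    case True
    then show ?thesis using v is_tree_singleton unfolding subtrees_def by auto
  next
    case False
    then obtain q where q: "q \<in> subtrees (V - {v}) (del_vertex E v)" "u \<in> fst q"
      and pq: "p = attach_leaf u v q" using p by auto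
    have "{u, v} \<in> E" using leaf by blast
    then show ?thesis using attach_leaf_in_subtrees[OF q v] pq unfolding attach_leaf_def by auto
  qed
qed

locale graph_leaf =
  fixes V :: "'a set" and E :: "'a set set" and u v :: 'a
  assumes simple: "simple_graph V E" and v: "v \<in> V" and u: "u \<in> V" "u \<noteq> v"
    and leaf: "{e\<in>E. v \<in> e} = {{u, v}}"
begin

lemma simple_graph_del_leaf: "simple_graph (V - {v}) (del_vertex E v)"
  using simple unfolding simple_graph_def del_vertex_def by auto

lemma card_subtrees_at_leaf:
  "card {p\<in>subtrees V E. v \<in> fst p \<and> Q p} =
   (if Q ({v}, {}) then 1 else 0) +
   card {p\<in>subtrees (V - {v}) (del_vertex E v). u \<in> fst p \<and> Q (attach_leaf u v p)}"
proof -
  let ?H = "subtrees (V - {v}) (del_vertex E v)"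
  let ?A = "{p\<in>?H. u \<in> fst p \<and> Q (attach_leaf u v p)}"
  have "{p\<in>subtrees V E. v \<in> fst p \<and> Q p} = {p \<in> {p\<in>subtrees V E. v \<in> fst p}. Q p}" by auto
  also have "\<dots> = (if Q ({v}, {}) then insert ({v}, {}) else id) (attach_leaf u v ` ?A)"
    unfolding subtrees_at_leaf[OF v u(2) leaf] by auto
  finally have eq: "{p\<in>subtrees V E. v \<in> fst p \<and> Q p} =
    (if Q ({v}, {}) then insert ({v}, {}) else id) (attach_leaf u v ` ?A)" .
  have "inj_on (attach_leaf u v) ?A" using inj_on_attach_leaf by (rule inj_on_subset) auto
  moreover have "finite ?A" using finite_subtrees[OF simple_graph_del_leaf] by auto
  moreover have "({v}, {}) \<notin> attach_leaf u v ` ?A" by (auto simp: attach_leaf_def)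
  ultimately show ?thesis unfolding eq by (simp add: card_image card_insert_if)
qed

lemma num_subtrees_at_leaf:
  "num_subtrees_at V E v = 1 + num_subtrees_at (V - {v}) (del_vertex E v) u"
  using card_subtrees_at_leaf[of "\<lambda>_. True"] unfolding num_subtrees_at_def by simp

lemma num_subtrees_del_leaf:
  "num_subtrees V E = num_subtrees (V - {v}) (del_vertex E v) + 1 + num_subtrees_at (V - {v}) (del_vertex E v) u"
  using num_subtrees_split_vertex[OF simple, of v] num_subtrees_at_leaf by simp

lemma num_subtrees_at_del_leaf:
  assumes "x \<noteq> v"
  shows "num_subtrees_at V E x = num_subtrees_at (V - {v}) (del_vertex E v) x +
    card {p\<in>subtrees (V - {v}) (del_vertex E v). u \<in> fst p \<and> x \<in> fst p}"
proof -
  let ?S = "{p\<in>subtrees V E. x \<in> fst p}"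
  have "num_subtrees_at V E x = card {q\<in>?S. v \<notin> fst q} + card {q\<in>?S. v \<in> fst q}"
    unfolding num_subtrees_at_def by (rule card_filter_partition) (use finite_subtrees[OF simple] in simp)
  moreover have "{q\<in>?S. v \<notin> fst q} = {p\<in>subtrees (V - {v}) (del_vertex E v). x \<in> fst p}"
    using subtrees_del_vertex[of V E v] by blast
  moreover have "{q\<in>?S. v \<in> fst q} = {p\<in>subtrees V E. v \<in> fst p \<and> x \<in> fst p}" by blast
  moreover have "card {p\<in>subtrees V E. v \<in> fst p \<and> x \<in> fst p} =
      card {p\<in>subtrees (V - {v}) (del_vertex E v). u \<in> fst p \<and> x \<in> fst p}"
    using card_subtrees_at_leaf[of "\<lambda>p. x \<in> fst p"] assms by (simp add: attach_leaf_def)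
  ultimately show ?thesis unfolding num_subtrees_at_def by simp
qed

lemma num_subtrees_at_del_leaf_le:
  assumes "x \<noteq> v"
  shows "num_subtrees_at V E x \<le> 2 * num_subtrees_at (V - {v}) (del_vertex E v) x"
proof -
  have "card {p\<in>subtrees (V - {v}) (del_vertex E v). u \<in> fst p \<and> x \<in> fst p}
      \<le> num_subtrees_at (V - {v}) (del_vertex E v) x"
    unfolding num_subtrees_at_def
    by (rule card_mono) (use finite_subtrees[OF simple_graph_del_leaf] in auto)
  then show ?thesis using num_subtrees_at_del_leaf[OF assms] by simp
qed

end

lemma deg_insert:
  "f \<notin> D \<Longrightarrow> finite D \<Longrightarrow> deg (insert f D) y = deg D y + (if y \<in> f then 1 else 0)"
proof -
  assume "f \<notin> D" "finite D"
  moreover have "{e\<in>insert f D. y \<in> e} = (if y \<in> f then insert f {e\<in>D. y \<in> e} else {e\<in>D. y \<in> e})"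
    by auto
  ultimately show ?thesis unfolding deg_def by simp
qed

lemma sum_deg_eq_twice_card:
  assumes "finite D" "finite S" "\<forall>f\<in>D. card f = 2 \<and> f \<subseteq> S"
  shows "(\<Sum>y\<in>S. deg D y) = 2 * card D"
  using assms
proof (induction D rule: finite_induct)
  case empty then show ?case by (simp add: deg_def)
next
  case (insert f D)
  have "(\<Sum>y\<in>S. deg (insert f D) y) = (\<Sum>y\<in>S. deg D y) + (\<Sum>y\<in>S. (if y \<in> f then 1 else 0))"
    using deg_insert[OF insert(2,1)] by (simp add: sum.distrib)
  also have "(\<Sum>y\<in>S. (if y \<in> f then 1 else 0)) = card (S \<inter> f)"
    using sum.inter_restrict[OF insert(4), of "\<lambda>_. 1::nat" f] by simp
  also have "S \<inter> f = f" using insert(5) by auto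
  finally show ?case using insert by simp
qed

lemma deg_two_if_card_edges_le:
  assumes "finite D" "finite S" "\<forall>f\<in>D. card f = 2 \<and> f \<subseteq> S"
    and "\<forall>y\<in>S. 2 \<le> deg D y" and "card D \<le> card S"
  shows "\<forall>y\<in>S. deg D y = 2"
proof (rule ccontr)
  assume "\<not> (\<forall>y\<in>S. deg D y = 2)"
  then have "\<exists>y\<in>S. 2 < deg D y" using assms(4) by force
  then have "(\<Sum>y\<in>S. 2) < (\<Sum>y\<in>S. deg D y)"
    using assms(2,4) by (intro sum_strict_mono_ex1) auto
  then show False using sum_deg_eq_twice_card[OF assms(1-3)] assms(5) by simp
qed

lemma deg_ge_1: "finite F \<Longrightarrow> y \<in> \<Union>F \<Longrightarrow> 1 \<le> deg F y"
  unfolding deg_def by (auto simp: Suc_le_eq card_gt_0_iff)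

lemma finite_Union_card_2: "finite F \<Longrightarrow> \<forall>f\<in>F. card f = 2 \<Longrightarrow> finite (\<Union>F)"
  by (metis card.infinite finite_Union zero_neq_numeral)

lemma connected_graph_deg_ge_1:
  assumes "simple_graph V E" "connected_graph V E" "2 \<le> card V" "x \<in> V"
  shows "1 \<le> deg E x"
proof -
  have "finite V" using assms(1) unfolding simple_graph_def by simp
  then have "card (V - {x}) \<noteq> 0" using assms(3,4) by simp
  then have "V - {x} \<noteq> {}" by force
  then obtain y where "y \<in> V" "y \<noteq> x" by blast
  then have "(x, y) \<in> (adj_rel E)\<^sup>*" using assms(2,4) unfolding connected_graph_def by auto
  then obtain z where "{x, z} \<in> E" using adj_rtrancl_first_edge \<open>y \<noteq> x\<close> by metis
  then have "x \<in> \<Union>E" by blast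
  then show ?thesis using deg_ge_1[OF simple_graph_finite_edges[OF assms(1)]] by simp
qed

lemma adj_rtrancl_edge_closed:
  assumes "(x, y) \<in> (adj_rel F)\<^sup>*" "f \<in> F" "y \<in> f" "card f = 2"
  shows "f \<subseteq> {z. (x, z) \<in> (adj_rel F)\<^sup>*}"
proof -
  obtain z where "z \<noteq> y" and f: "f = {y, z}" using card_2_elem_obtain[OF assms(4,3)] by blast
  then have "(y, z) \<in> adj_rel F" using assms(2) by simp
  then have "(x, z) \<in> (adj_rel F)\<^sup>*" using assms(1) by (rule rtrancl_into_rtrancl[rotated])
  then show ?thesis using assms(1) f by simp
qed

definition min_deg_two :: "'a set set \<Rightarrow> bool" where
  "min_deg_two F \<longleftrightarrow> F \<noteq> {} \<and> (\<forall>y\<in>\<Union>F. 2 \<le> deg F y)"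

text \<open>Induction: the edge set itself does not have minimum degree two, so some vertex has degree
  one, and its edge can be deleted.\<close>
lemma card_edges_less_if_no_min_deg_two:
  assumes "finite G" "\<forall>f\<in>G. card f = 2" "G \<noteq> {}" "\<forall>D\<subseteq>G. \<not> min_deg_two D"
  shows "card G < card (\<Union>G)"
  using assms
proof (induction "card G" arbitrary: G rule: less_induct)
  case less
  have "\<not> min_deg_two G" using less.prems by auto
  then obtain y where y: "y \<in> \<Union>G" "deg G y < 2" using less.prems(3) unfolding min_deg_two_def by force
  moreover have "1 \<le> deg G y" using deg_ge_1[OF less.prems(1) y(1)] .
  ultimately have "card {e\<in>G. y \<in> e} = 1" unfolding deg_def by simp
  then obtain e0 where e0: "{e\<in>G. y \<in> e} = {e0}" using card_1_singletonE by blast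
  define G' where "G' = G - {e0}"
  have finU: "finite (\<Union>G)" using finite_Union_card_2 less.prems(1,2) .
  have sub: "\<Union>G' \<subseteq> \<Union>G - {y}" using e0 unfolding G'_def by auto
  have "e0 \<in> G" using e0 by auto
  then have cG: "card G = Suc (card G')"
    unfolding G'_def using card_Suc_Diff1[OF less.prems(1)] by simp
  show ?case
  proof (cases "G' = {}")
    case True
    then have "G = {e0}" using e0 unfolding G'_def by auto
    then show ?thesis using less.prems(2) by auto
  next
    case False
    have "card G' < card (\<Union>G')"
      by (rule less.hyps) (use less.prems False cG in \<open>auto simp: G'_def\<close>)
    moreover have "card (\<Union>G') \<le> card (\<Union>G - {y})" using sub finU by (simp add: card_mono)
    moreover have "card (\<Union>G - {y}) < card (\<Union>G)" by (rule card_Diff1_less[OF finU y(1)])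
    ultimately show ?thesis using cG by linarith
  qed
qed

context
  fixes F :: "'a set set"
  assumes finite: "finite F" and card_2: "\<forall>f\<in>F. card f = 2"
    and min_deg: "min_deg_two F" and minimal: "\<not> (\<exists>D. D \<subset> F \<and> min_deg_two D)"
begin

lemma minimal_min_deg_two_regular: "\<forall>y\<in>\<Union>F. deg F y = 2"
proof (rule deg_two_if_card_edges_le)
  show "finite (\<Union>F)" using finite_Union_card_2 finite card_2 .
  show "\<forall>y\<in>\<Union>F. 2 \<le> deg F y" using min_deg unfolding min_deg_two_def by auto
  show "card F \<le> card (\<Union>F)"
  proof (rule ccontr)
    assume less: "\<not> card F \<le> card (\<Union>F)"
    obtain e where e: "e \<in> F" using min_deg unfolding min_deg_two_def by auto
    have "F - {e} \<noteq> {}"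
    proof
      assume "F - {e} = {}"
      then have "F = {e}" using e by auto
      then show False using less card_2 by simp
    qed
    moreover have "\<forall>D\<subseteq>F - {e}. \<not> min_deg_two D" using minimal e by blast
    ultimately have "card (F - {e}) < card (\<Union>(F - {e}))"
      using card_edges_less_if_no_min_deg_two[of "F - {e}"] finite card_2 by auto
    moreover have "card (\<Union>(F - {e})) \<le> card (\<Union>F)"
      using finite_Union_card_2[OF finite card_2] by (intro card_mono) auto
    ultimately show False using less e finite by (simp add: card_Diff_singleton)
  qed
qed (use finite card_2 in auto)

lemma minimal_min_deg_two_connected: "connected_graph (\<Union>F) F"
proof -
  obtain f x where fx: "f \<in> F" "x \<in> f" using min_deg card_2 unfolding min_deg_two_def
    by (metis card.empty ex_in_conv zero_neq_numeral)
  define R where "R = {y. (x, y) \<in> (adj_rel F)\<^sup>*}"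
  define D where "D = {f\<in>F. f \<subseteq> R}"
  have closed: "g \<subseteq> R" if "g \<in> F" "w \<in> g" "w \<in> R" for g w
  proof -
    have "(x, w) \<in> (adj_rel F)\<^sup>*" using that(3) unfolding R_def by simp
    moreover have "card g = 2" using card_2 that(1) by blast
    ultimately show ?thesis using adj_rtrancl_edge_closed[OF _ that(1,2)] unfolding R_def by blast
  qed
  have "f \<in> D" using fx closed[OF fx] unfolding D_def R_def by auto
  have "min_deg_two D" unfolding min_deg_two_def
  proof (intro conjI ballI)
    show "D \<noteq> {}" using \<open>f \<in> D\<close> by auto
  next
    fix y assume y: "y \<in> \<Union>D"
    then have "{e\<in>D. y \<in> e} = {e\<in>F. y \<in> e}" using closed unfolding D_def by auto
    moreover have "y \<in> \<Union>F" using y unfolding D_def by auto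
    then have "2 \<le> deg F y" using min_deg unfolding min_deg_two_def by blast
    ultimately show "2 \<le> deg D y" unfolding deg_def by simp
  qed
  moreover have "D \<subseteq> F" unfolding D_def by auto
  ultimately have "D = F" using minimal psubsetI by metis
  then have "\<Union>F \<subseteq> R" unfolding D_def by auto
  then show ?thesis using fx by (intro connected_graphI_hub[of x]) (auto simp: R_def)
qed

end

lemma min_deg_two_has_cycle:
  assumes "finite F" "\<forall>f\<in>F. card f = 2" "min_deg_two F"
  shows "\<exists>C. is_cycle F C"
  using assms
proof (induction "card F" arbitrary: F rule: less_induct)
  case less
  show ?case
  proof (cases "\<exists>D. D \<subset> F \<and> min_deg_two D")
    case True
    then obtain D where D: "D \<subset> F" "min_deg_two D" by blast
    then have "finite D" "card D < card F" using less.prems(1) finite_subset psubset_card_mono by auto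
    then obtain C where "is_cycle D C" using less.hyps[of D] D less.prems(2) by blast
    then show ?thesis using D is_cycle_mono by blast
  next
    case False
    note regular = minimal_min_deg_two_regular[OF less.prems False]
    note connected = minimal_min_deg_two_connected[OF less.prems False]
    have "is_cycle F F"
      using less.prems(1,3) connected regular unfolding is_cycle_def min_deg_two_def deg_def by auto
    then show ?thesis by blast
  qed
qed

lemma card_edges_less_if_acyclic:
  assumes "finite G" "\<forall>f\<in>G. card f = 2" "G \<noteq> {}" "\<not> (\<exists>C. is_cycle G C)"
  shows "card G < card (\<Union>G)"
proof (rule card_edges_less_if_no_min_deg_two[OF assms(1-3)], intro allI impI notI)
  fix D assume D: "D \<subseteq> G" "min_deg_two D"
  then have "\<exists>C. is_cycle D C" using min_deg_two_has_cycle[of D] assms(1,2) finite_subset by blast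
  then show False using assms(4) D is_cycle_mono by metis
qed

lemma tree_has_leaf:
  assumes t: "is_tree V E" and c: "2 \<le> card V"
  shows "\<exists>v\<in>V. deg E v = 1"
proof -
  have s: "simple_graph V E" and conn: "connected_graph V E" and nc: "\<not> (\<exists>C. is_cycle E C)"
    using t unfolding is_tree_def by auto
  have fin: "finite E" using simple_graph_finite_edges[OF s] .
  have c2: "\<forall>f\<in>E. card f = 2" using s unfolding simple_graph_def by auto
  obtain x where x: "x \<in> V" using c by fastforce
  have "1 \<le> deg E x" using connected_graph_deg_ge_1[OF s conn c x] .
  then have "E \<noteq> {}" unfolding deg_def by auto
  then obtain w where w: "w \<in> \<Union>E" "deg E w < 2"
    using min_deg_two_has_cycle[OF fin c2] nc unfolding min_deg_two_def by force
  moreover have "w \<in> V" using w(1) s unfolding simple_graph_def by auto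
  ultimately show ?thesis using deg_ge_1[OF fin w(1)] by (intro bexI[of _ w]) auto
qed

lemma leaf_edge:
  assumes s: "simple_graph V E" and v: "v \<in> V" and d: "deg E v = 1"
  obtains u where "u \<in> V" "u \<noteq> v" "{e\<in>E. v \<in> e} = {{u, v}}"
proof -
  obtain e0 where e0: "{e\<in>E. v \<in> e} = {e0}" using d unfolding deg_def using card_1_singletonE by blast
  then have "e0 \<in> E" "v \<in> e0" by auto
  then have "card e0 = 2" "e0 \<subseteq> V" using s unfolding simple_graph_def by auto
  then obtain u where "u \<noteq> v" "e0 = {v, u}" using card_2_elem_obtain[of e0 v] \<open>v \<in> e0\<close> by blast
  then show ?thesis by (intro that[of u]) (use e0 \<open>e0 \<subseteq> V\<close> in \<open>auto simp: insert_commute\<close>)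
qed

text \<open>Parity: inside the component \<open>R\<close> of \<open>a\<close> in \<open>C - {{a, b}}\<close> every vertex except \<open>a\<close> keeps
  degree two, so the degree sum over \<open>R\<close> would be odd.\<close>
lemma cycle_del_edge_connects:
  assumes C: "is_cycle E C" and card_2: "\<forall>f\<in>C. card f = 2" and e: "{a, b} \<in> C" and ab: "a \<noteq> b"
  shows "(a, b) \<in> (adj_rel (C - {{a, b}}))\<^sup>*"
proof (rule ccontr)
  assume nb: "(a, b) \<notin> (adj_rel (C - {{a, b}}))\<^sup>*"
  define C' where "C' = C - {{a, b}}"
  define R where "R = {y. (a, y) \<in> (adj_rel C')\<^sup>*}"
  define D where "D = {f\<in>C'. f \<subseteq> R}"
  have finC: "finite C" using C unfolding is_cycle_def by auto
  have aR: "a \<in> R" and bR: "b \<notin> R" using nb unfolding R_def C'_def by auto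
  have RU: "R \<subseteq> \<Union>C"
  proof
    fix y assume "y \<in> R"
    then have "(a, y) \<in> (adj_rel C')\<^sup>*" unfolding R_def by simp
    then show "y \<in> \<Union>C"
      by (induction rule: rtrancl_induct) (use e in \<open>auto simp: C'_def\<close>)
  qed
  have finR: "finite R" using finite_subset[OF RU finite_Union_card_2[OF finC card_2]] .
  have closed: "f \<subseteq> R" if "f \<in> C'" "y \<in> f" "y \<in> R" for f y
  proof -
    have "(a, y) \<in> (adj_rel C')\<^sup>*" using that(3) unfolding R_def by simp
    moreover have "card f = 2" using card_2 that(1) unfolding C'_def by blast
    ultimately show ?thesis using adj_rtrancl_edge_closed[OF _ that(1,2)] unfolding R_def by blast
  qed
  have deg_R: "deg D y + (if y = a then 1 else 0) = 2" if y: "y \<in> R" for y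
  proof -
    have "card {e\<in>C. y \<in> e} = 2" using C RU y unfolding is_cycle_def by auto
    moreover have "{e\<in>C. y \<in> e} = (if y = a then insert {a, b} {e\<in>C'. y \<in> e} else {e\<in>C'. y \<in> e})"
      using e y bR unfolding C'_def by auto
    moreover have "{e\<in>D. y \<in> e} = {e\<in>C'. y \<in> e}" using closed y unfolding D_def by auto
    moreover have "finite {e\<in>C'. y \<in> e}" using finC unfolding C'_def by auto
    ultimately show ?thesis unfolding deg_def C'_def by (simp split: if_splits)
  qed
  have "(\<Sum>y\<in>R. deg D y) = 2 * card D"
    by (rule sum_deg_eq_twice_card) (use finC finR card_2 in \<open>auto simp: D_def C'_def\<close>)
  moreover have "(\<Sum>y\<in>R. deg D y + (if y = a then 1 else 0)) = (\<Sum>y\<in>R. deg D y) + 1"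
    using aR finR by (simp add: sum.distrib)
  moreover have "(\<Sum>y\<in>R. deg D y + (if y = a then 1 else 0)) = 2 * card R"
    using deg_R by simp
  ultimately show False by presburger
qed

lemma connected_graph_del_cycle_edge:
  assumes "connected_graph V E" "is_cycle E C" "\<forall>f\<in>C. card f = 2" "{a, b} \<in> C" "a \<noteq> b"
  shows "connected_graph V (E - {{a, b}})"
proof (rule connected_graph_subst_edges[OF assms(1)])
  have "C - {{a, b}} \<subseteq> E - {{a, b}}" using assms(2) unfolding is_cycle_def by auto
  then have ab: "(a, b) \<in> (adj_rel (E - {{a, b}}))\<^sup>*"
    by (rule adj_rtrancl_mono[OF _ cycle_del_edge_connects[OF assms(2-5)]])
  fix p q assume "{p, q} \<in> E"
  then show "(p, q) \<in> (adj_rel (E - {{a, b}}))\<^sup>*"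
  proof (cases "{p, q} = {a, b}")
    case True
    then have "(p = a \<and> q = b) \<or> (p = b \<and> q = a)" by (simp add: doubleton_eq_iff)
    then show ?thesis using ab adj_rtrancl_sym by auto
  qed (simp add: adj_rtrancl_edge)
qed

definition cycle_graph :: "'a set \<Rightarrow> 'a set set \<Rightarrow> bool" where
  "cycle_graph V E \<longleftrightarrow> simple_graph V E \<and> connected_graph V E \<and> (\<forall>x\<in>V. deg E x = 2)"

definition path_graph :: "'a set \<Rightarrow> 'a set set \<Rightarrow> bool" where
  "path_graph V E \<longleftrightarrow> is_tree V E \<and> (\<forall>x\<in>V. deg E x \<le> 2)"

lemma deg_two_edges:
  assumes "finite E" "\<forall>f\<in>E. card f = 2" "deg E x = 2"
  obtains a b where "a \<noteq> b" "a \<noteq> x" "b \<noteq> x" "{e\<in>E. x \<in> e} = {{x, a}, {x, b}}"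
proof -
  obtain e1 e2 where e12: "e1 \<noteq> e2" "{e\<in>E. x \<in> e} = {e1, e2}"
    using assms(3) unfolding deg_def by (meson card_2_iff)
  then have "e1 \<in> E" "x \<in> e1" "e2 \<in> E" "x \<in> e2" by auto
  then have "card e1 = 2" "card e2 = 2" using assms(2) by auto
  obtain a where a: "a \<noteq> x" "e1 = {x, a}" using card_2_elem_obtain[of e1 x] \<open>card e1 = 2\<close> \<open>x \<in> e1\<close> by blast
  obtain b where b: "b \<noteq> x" "e2 = {x, b}" using card_2_elem_obtain[of e2 x] \<open>card e2 = 2\<close> \<open>x \<in> e2\<close> by blast
  show ?thesis by (rule that[of a b]) (use a b e12 in auto)
qed

lemma deg_del_vertex:
  "finite E \<Longrightarrow> deg (del_vertex E v) x + card {e\<in>E. v \<in> e \<and> x \<in> e} = deg E x"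
  unfolding deg_def del_vertex_def
  by (subst card_Un_disjoint[symmetric]) (auto intro: arg_cong[where f = card])

lemma deg_del_vertex_le: "finite E \<Longrightarrow> deg (del_vertex E v) x \<le> deg E x"
  using deg_del_vertex by (metis le_add1)

context
  fixes V :: "'a set" and E :: "'a set set"
  assumes cycle: "cycle_graph V E"
begin

lemma cycle_graph_simple: "simple_graph V E"
  and cycle_graph_finite_edges: "finite E"
  and cycle_graph_card_2: "\<forall>f\<in>E. card f = 2"
  and cycle_graph_finite: "finite V"
  and cycle_graph_deg: "\<forall>x\<in>V. deg E x = 2"
  using cycle simple_graph_finite_edges unfolding cycle_graph_def simple_graph_def by blast+

lemma cycle_graph_Union: "\<Union>E = V"
proof
  show "\<Union>E \<subseteq> V" using cycle_graph_simple unfolding simple_graph_def by auto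
  show "V \<subseteq> \<Union>E"
  proof
    fix x assume "x \<in> V"
    then have "card {e\<in>E. x \<in> e} = 2" using cycle_graph_deg unfolding deg_def by blast
    then have "{e\<in>E. x \<in> e} \<noteq> {}" by (metis card.empty zero_neq_numeral)
    then show "x \<in> \<Union>E" by blast
  qed
qed

lemma cycle_graph_is_cycle: "is_cycle E E"
proof -
  have "V \<noteq> {}" using cycle unfolding cycle_graph_def connected_graph_def by auto
  then show ?thesis
    using cycle cycle_graph_finite_edges cycle_graph_Union
    unfolding is_cycle_def cycle_graph_def deg_def by auto
qed

lemma cycle_graph_unique_cycle:
  assumes C: "is_cycle E C"
  shows "C = E"
proof -
  have CE: "C \<subseteq> E" using C unfolding is_cycle_def by auto
  have local: "{e\<in>E. y \<in> e} = {e\<in>C. y \<in> e}" if y: "y \<in> \<Union>C" for y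
  proof -
    have "card {e\<in>C. y \<in> e} = 2" using C y unfolding is_cycle_def by auto
    moreover have "card {e\<in>E. y \<in> e} = 2"
      using cycle_graph_deg CE y cycle_graph_Union unfolding deg_def by auto
    moreover have "{e\<in>C. y \<in> e} \<subseteq> {e\<in>E. y \<in> e}" using CE by auto
    ultimately show ?thesis using cycle_graph_finite_edges by (metis (no_types, lifting) card_subset_eq finite_subset mem_Collect_eq subsetI)
  qed
  obtain f where "f \<in> C" using C unfolding is_cycle_def by auto
  moreover from this have "card f = 2" using CE cycle_graph_card_2 by auto
  then obtain x where "x \<in> f" by fastforce
  ultimately have x: "x \<in> \<Union>C" by blast
  have V_C: "y \<in> \<Union>C" if "y \<in> V" for y
  proof -
    have "(x, y) \<in> (adj_rel E)\<^sup>*"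
      using cycle x that CE cycle_graph_Union unfolding cycle_graph_def connected_graph_def by auto
    then show ?thesis
    proof (induction rule: rtrancl_induct)
      case (step y z)
      then have "{y, z} \<in> C" using local by auto
      then show ?case by auto
    qed (rule x)
  qed
  have "E \<subseteq> C"
  proof
    fix e assume e: "e \<in> E"
    then have "card e = 2" using cycle_graph_card_2 by blast
    then obtain y where y: "y \<in> e" by fastforce
    then have "y \<in> \<Union>C" using e V_C cycle_graph_Union by blast
    then show "e \<in> C" using local[of y] e y by blast
  qed
  then show ?thesis using CE by auto
qed

lemma cycle_graph_has_cycle_iff:
  assumes "F \<subseteq> E"
  shows "(\<exists>C. is_cycle F C) \<longleftrightarrow> F = E"
proof
  assume "\<exists>C. is_cycle F C"
  then obtain C where C: "is_cycle F C" by blast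
  have "C = E" by (rule cycle_graph_unique_cycle[OF is_cycle_mono[OF C assms]])
  then show "F = E" using C assms unfolding is_cycle_def by auto
qed (use cycle_graph_is_cycle in blast)

lemma cycle_graph_neighbours:
  assumes "v \<in> V"
  obtains a b where "a \<noteq> b" "a \<noteq> v" "b \<noteq> v" "a \<in> V" "b \<in> V" "{e\<in>E. v \<in> e} = {{v, a}, {v, b}}"
proof -
  have "deg E v = 2" using cycle_graph_deg assms by blast
  then obtain a b where ab: "a \<noteq> b" "a \<noteq> v" "b \<noteq> v" "{e\<in>E. v \<in> e} = {{v, a}, {v, b}}"
    by (rule deg_two_edges[OF cycle_graph_finite_edges cycle_graph_card_2])
  then have "{v, a} \<in> E" "{v, b} \<in> E" by auto
  then have "a \<in> V" "b \<in> V" using cycle_graph_simple unfolding simple_graph_def by auto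
  then show ?thesis by (intro that[of a b]) (use ab in auto)
qed

lemma cycle_graph_del_vertex:
  assumes v: "v \<in> V" and ab: "a \<noteq> b" "a \<noteq> v" "b \<noteq> v"
    and nb: "{e\<in>E. v \<in> e} = {{v, a}, {v, b}}"
  shows "path_graph (V - {v}) (del_vertex E v)"
    and "deg (del_vertex E v) a \<le> 1" and "deg (del_vertex E v) b \<le> 1"
proof -
  have vaE: "{v, a} \<in> E" and vbE: "{v, b} \<in> E" using nb by auto
  have "connected_graph V E" using cycle unfolding cycle_graph_def by simp
  then have conn: "connected_graph V (E - {{v, a}})"
    using connected_graph_del_cycle_edge[OF _ cycle_graph_is_cycle cycle_graph_card_2 vaE] ab(2) by simp
  have aV: "a \<in> V" and bV: "b \<in> V"
    using vaE vbE cycle_graph_simple unfolding simple_graph_def by auto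
  have "{e\<in>E - {{v, a}}. v \<in> e} \<subseteq> {{b, v}}" using nb insert_commute[of v b "{}"] by blast
  moreover have "del_vertex (E - {{v, a}}) v = del_vertex E v" unfolding del_vertex_def by auto
  ultimately have connected: "connected_graph (V - {v}) (del_vertex E v)"
    using connected_graph_del_leaf[OF conn bV ab(3)] by simp
  have "simple_graph (V - {v}) (del_vertex E v)"
    using cycle_graph_simple unfolding simple_graph_def del_vertex_def by auto
  moreover have "\<not> (\<exists>C. is_cycle (del_vertex E v) C)"
  proof -
    have "del_vertex E v \<subseteq> E" "del_vertex E v \<noteq> E" using vaE unfolding del_vertex_def by auto
    then show ?thesis using cycle_graph_has_cycle_iff by blast
  qed
  moreover have deg_del: "deg (del_vertex E v) x + card {e\<in>E. v \<in> e \<and> x \<in> e} = 2" if "x \<in> V" for x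
    using deg_del_vertex[OF cycle_graph_finite_edges, of v x] cycle_graph_deg that by simp
  then have "\<forall>x\<in>V - {v}. deg (del_vertex E v) x \<le> 2" by fastforce
  ultimately show "path_graph (V - {v}) (del_vertex E v)"
    using connected unfolding path_graph_def is_tree_def by simp
  have "{v, a} \<in> {e\<in>E. v \<in> e \<and> a \<in> e}" "{v, b} \<in> {e\<in>E. v \<in> e \<and> b \<in> e}" using vaE vbE by auto
  then have "card {e\<in>E. v \<in> e \<and> a \<in> e} \<noteq> 0" "card {e\<in>E. v \<in> e \<and> b \<in> e} \<noteq> 0"
    using cycle_graph_finite_edges by auto
  then show "deg (del_vertex E v) a \<le> 1" "deg (del_vertex E v) b \<le> 1"
    using deg_del[OF aV] deg_del[OF bV] by linarith+
qed

end

lemma subtrees_singleton: "subtrees {x} ({}::'a set set) = {({}, {}), ({x}, {})}"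
proof (intro set_eqI iffI)
  fix p assume "p \<in> subtrees {x} {}"
  then obtain W where "p = (W, {})" "W \<subseteq> {x}" "W = {} \<or> is_tree W {}" unfolding subtrees_def by auto
  then show "p \<in> {({}, {}), ({x}, ({}::'a set set))}" by (metis insertCI subset_singletonD)
qed (auto simp: subtrees_def is_tree_singleton)

lemma num_subtrees_singleton: "num_subtrees {x} ({}::'a set set) = 2"
  unfolding num_subtrees_def subtrees_singleton by simp

lemma num_subtrees_at_singleton: "num_subtrees_at {x} ({}::'a set set) x = 1"
proof -
  have "{p\<in>{({}, {}), ({x}, {})}. x \<in> fst p} = {({x}, ({}::'a set set))}" by (rule set_eqI) auto
  then show ?thesis unfolding num_subtrees_at_def subtrees_singleton by simp
qed

lemma path_graph_del_leaf:
  assumes path: "path_graph V E" and v: "v \<in> V" and u: "u \<noteq> v"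
    and leaf: "{e\<in>E. v \<in> e} = {{u, v}}" and card: "2 \<le> card V"
  shows "path_graph (V - {v}) (del_vertex E v)" and "deg (del_vertex E v) u \<le> 1"
proof -
  have t: "is_tree V E" and deg: "\<forall>x\<in>V. deg E x \<le> 2" using path unfolding path_graph_def by auto
  have fin: "finite E" using simple_graph_finite_edges t unfolding is_tree_def by blast
  have "V \<noteq> {v}" using card by auto
  moreover have "del_vertex E v = E - {{u, v}}" using leaf unfolding del_vertex_def by auto
  ultimately have t': "is_tree (V - {v}) (del_vertex E v)" and uV: "u \<in> V"
    using tree_del_leaf[OF t v _ _ u] leaf by auto
  have "\<forall>x\<in>V - {v}. deg (del_vertex E v) x \<le> 2"
    using deg deg_del_vertex_le[OF fin] by (meson DiffD1 le_trans)
  then show "path_graph (V - {v}) (del_vertex E v)" using t' unfolding path_graph_def by simp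
  have "{e\<in>E. v \<in> e \<and> u \<in> e} = {{u, v}}" using leaf by auto
  then show "deg (del_vertex E v) u \<le> 1"
    using deg_del_vertex[OF fin, of v u] deg uV by fastforce
qed

lemma path_graph_num_subtrees:
  "path_graph V E \<Longrightarrow> card V = m \<Longrightarrow>
    2 * num_subtrees V E = m * (m + 1) + 2 \<and> (\<forall>x\<in>V. deg E x \<le> 1 \<longrightarrow> num_subtrees_at V E x = m)"
proof (induction m arbitrary: V E)
  case 0
  then have "is_tree V E" "finite V" unfolding path_graph_def is_tree_def simple_graph_def by auto
  then show ?case using 0 is_tree_nonempty by auto
next
  case (Suc m)
  have t: "is_tree V E" using Suc.prems unfolding path_graph_def by auto
  have s: "simple_graph V E" and conn: "connected_graph V E" using t unfolding is_tree_def by auto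
  show ?case
  proof (cases "m = 0")
    case True
    then obtain x where V: "V = {x}" using Suc.prems(2) card_1_singletonE by auto
    moreover have "E = {}" using is_tree_singleton_edges t V by simp
    ultimately show ?thesis using num_subtrees_singleton[of x] num_subtrees_at_singleton[of x] True by simp
  next
    case False
    then have card: "2 \<le> card V" using Suc.prems(2) by simp
    have leaf_step: "num_subtrees V E = num_subtrees (V - {v}) (del_vertex E v) + 1 + m
        \<and> num_subtrees_at V E v = Suc m"
      if v: "v \<in> V" "deg E v \<le> 1" for v
    proof -
      have "deg E v = 1" using v connected_graph_deg_ge_1[OF s conn card v(1)] by simp
      then obtain u where nbr: "u \<in> V" "u \<noteq> v" "{e\<in>E. v \<in> e} = {{u, v}}"
        using leaf_edge[OF s v(1)] by blast
      interpret graph_leaf V E u v using s v nbr by unfold_locales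
      note del = path_graph_del_leaf[OF Suc.prems(1) v(1) nbr(2,3) card]
      have "card (V - {v}) = m" using Suc.prems(2) v by simp
      then have "num_subtrees_at (V - {v}) (del_vertex E v) u = m"
        using Suc.IH[OF del(1)] del(2) nbr by simp
      then show ?thesis using num_subtrees_del_leaf num_subtrees_at_leaf by simp
    qed
    obtain v where v: "v \<in> V" "deg E v = 1" using tree_has_leaf[OF t card] by blast
    have "card (V - {v}) = m" using Suc.prems(2) v by simp
    then have "2 * num_subtrees (V - {v}) (del_vertex E v) = m * (m + 1) + 2"
      using Suc.IH path_graph_del_leaf(1)[OF Suc.prems(1) v(1)] leaf_edge[OF s v] card
      by (metis (no_types, lifting))
    then show ?thesis using leaf_step v by fastforce
  qed
qed

section \<open>Subtrees of cycle graphs\<close>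

lemma cycle_graph_triangle:
  assumes "x \<noteq> y" "x \<noteq> z" "y \<noteq> z"
  shows "cycle_graph {x, y, z} {{x, y}, {x, z}, {y, z}}"
  unfolding cycle_graph_def
proof (intro conjI ballI)
  show "simple_graph {x, y, z} {{x, y}, {x, z}, {y, z}}"
    using assms unfolding simple_graph_def by auto
  show "connected_graph {x, y, z} {{x, y}, {x, z}, {y, z}}"
    by (rule connected_graphI_hub[of x]) (auto intro: adj_rtrancl_edge)
next
  fix w assume "w \<in> {x, y, z}"
  then consider "w = x" | "w = y" | "w = z" by blast
  then show "deg {{x, y}, {x, z}, {y, z}} w = 2"
  proof cases
    case 1
    then have "{e\<in>{{x, y}, {x, z}, {y, z}}. w \<in> e} = {{x, y}, {x, z}}" using assms by auto
    then show ?thesis unfolding deg_def using assms by (simp add: doubleton_eq_iff)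
  next
    case 2
    then have "{e\<in>{{x, y}, {x, z}, {y, z}}. w \<in> e} = {{x, y}, {y, z}}" using assms by auto
    then show ?thesis unfolding deg_def using assms by (simp add: doubleton_eq_iff)
  next
    case 3
    then have "{e\<in>{{x, y}, {x, z}, {y, z}}. w \<in> e} = {{x, z}, {y, z}}" using assms by auto
    then show ?thesis unfolding deg_def using assms by (simp add: doubleton_eq_iff)
  qed
qed

locale cycle_vertex =
  fixes V :: "'a set" and E :: "'a set set" and v a b :: 'a
  assumes cycle: "cycle_graph V E" and v: "v \<in> V" and ab: "a \<noteq> b" "a \<noteq> v" "b \<noteq> v"
    and nbrs: "{e\<in>E. v \<in> e} = {{v, a}, {v, b}}"
begin

lemma simple: "simple_graph V E"
  using cycle cycle_graph_simple by blast

lemma va_edge: "{v, a} \<in> E" and vb_edge: "{v, b} \<in> E"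
  using nbrs by auto

lemma aV: "a \<in> V" and bV: "b \<in> V"
  using va_edge vb_edge simple unfolding simple_graph_def by auto

lemma edge_at_v: "e \<in> E \<Longrightarrow> v \<in> e \<Longrightarrow> e = {v, a} \<or> e = {v, b}"
  using nbrs by blast

lemma path_del_v: "path_graph (V - {v}) (del_vertex E v)"
  and deg_a: "deg (del_vertex E v) a \<le> 1" and deg_b: "deg (del_vertex E v) b \<le> 1"
  using cycle_graph_del_vertex[OF cycle v ab nbrs] by auto

lemma num_subtrees_at_end:
  assumes "c \<in> {a, b}"
  shows "num_subtrees_at (V - {v}) (del_vertex E v) c = card V - 1"
proof -
  have "c \<in> V - {v}" "deg (del_vertex E v) c \<le> 1" using deg_a deg_b aV bV ab assms by auto
  then have "num_subtrees_at (V - {v}) (del_vertex E v) c = card (V - {v})"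
    using path_graph_num_subtrees[OF path_del_v refl] by blast
  then show ?thesis using v cycle_graph_finite[OF cycle] by simp
qed

lemma vb_ne_va: "{v, b} \<noteq> {v, a}"
  using ab by (simp add: doubleton_eq_iff)

text \<open>Without the edge \<open>{v, a}\<close> the vertex \<open>v\<close> is a leaf hanging at the end \<open>b\<close> of a path.\<close>
lemma card_subtrees_at_v_without_edge:
  "card {p\<in>subtrees V E. v \<in> fst p \<and> {v, a} \<notin> snd p} = card V"
proof -
  have "{e\<in>E - {{v, a}}. v \<in> e} = {{v, a}, {v, b}} - {{v, a}}" using nbrs by blast
  also have "\<dots> = {{b, v}}" using vb_ne_va by (auto simp: insert_commute)
  finally have leaf: "{e\<in>E - {{v, a}}. v \<in> e} = {{b, v}}" .
  have "simple_graph V (E - {{v, a}})" using simple_graph_mono[OF simple] by blast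
  then interpret graph_leaf V "E - {{v, a}}" b v using v bV ab(3) leaf by unfold_locales
  have "del_vertex (E - {{v, a}}) v = del_vertex E v" unfolding del_vertex_def by auto
  moreover have "1 \<le> card V" using v cycle_graph_finite[OF cycle] by (simp add: Suc_le_eq card_gt_0_iff) blast
  ultimately have "num_subtrees_at V (E - {{v, a}}) v = card V"
    using num_subtrees_at_leaf num_subtrees_at_end[of b] by simp
  moreover have "{p\<in>subtrees V (E - {{v, a}}). v \<in> fst p} = {p\<in>subtrees V E. v \<in> fst p \<and> {v, a} \<notin> snd p}"
    unfolding subtrees_del_edge by blast
  ultimately show ?thesis unfolding num_subtrees_at_def by simp
qed

definition subtrees_through :: "('a set \<times> 'a set set) set" where
  "subtrees_through = {p\<in>subtrees V E. v \<in> fst p \<and> {v, a} \<in> snd p \<and> {v, b} \<in> snd p}"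

lemma subtrees_at_v_without_edges:
  "{p\<in>subtrees V E. v \<in> fst p \<and> {v, a} \<notin> snd p \<and> {v, b} \<notin> snd p} = {({v}, {})}"
proof (intro set_eqI iffI)
  fix p assume p: "p \<in> {p\<in>subtrees V E. v \<in> fst p \<and> {v, a} \<notin> snd p \<and> {v, b} \<notin> snd p}"
  obtain W F where pWF: "p = (W, F)" by fastforce
  have WF: "F \<subseteq> E" "is_tree W F" "v \<in> W" "{v, a} \<notin> F" "{v, b} \<notin> F"
    using p pWF unfolding subtrees_def by auto
  then have "{e\<in>F. v \<in> e} \<subseteq> {{a, v}}" using edge_at_v by auto
  then have "W = {v}" using tree_del_leaf(1)[OF WF(2,3) _ _ ab(2)] WF(4) by (auto simp: insert_commute)
  then show "p \<in> {({v}, {})}" using pWF is_tree_singleton_edges[of v F] WF(2) by auto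
qed (use v is_tree_singleton in \<open>auto simp: subtrees_def\<close>)

lemma num_subtrees_at_v:
  "num_subtrees_at V E v = card V + (card V - 1) + card subtrees_through"
proof -
  have fin: "finite (subtrees V E)" using finite_subtrees[OF simple] .
  let ?S = "\<lambda>P. {p\<in>subtrees V E. v \<in> fst p \<and> P p}"
  have without_a: "card (?S (\<lambda>p. {v, a} \<notin> snd p)) = card V"
    by (rule card_subtrees_at_v_without_edge)
  interpret swapped: cycle_vertex V E v b a
    using cycle v ab nbrs by unfold_locales (auto simp: insert_commute)
  have "card (?S (\<lambda>p. {v, b} \<notin> snd p)) = card V"
    by (rule swapped.card_subtrees_at_v_without_edge)
  moreover have "?S (\<lambda>p. {v, b} \<notin> snd p) =
      ?S (\<lambda>p. {v, a} \<notin> snd p \<and> {v, b} \<notin> snd p) \<union> ?S (\<lambda>p. {v, a} \<in> snd p \<and> {v, b} \<notin> snd p)"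
    by auto
  moreover have "card (?S (\<lambda>p. {v, a} \<notin> snd p \<and> {v, b} \<notin> snd p) \<union> ?S (\<lambda>p. {v, a} \<in> snd p \<and> {v, b} \<notin> snd p))
      = 1 + card (?S (\<lambda>p. {v, a} \<in> snd p \<and> {v, b} \<notin> snd p))"
    using fin subtrees_at_v_without_edges by (subst card_Un_disjoint) auto
  ultimately have only_a: "card (?S (\<lambda>p. {v, a} \<in> snd p \<and> {v, b} \<notin> snd p)) = card V - 1" by simp
  have "{p\<in>subtrees V E. v \<in> fst p} =
      ?S (\<lambda>p. {v, a} \<notin> snd p) \<union> (?S (\<lambda>p. {v, a} \<in> snd p \<and> {v, b} \<notin> snd p) \<union> subtrees_through)"
    unfolding subtrees_through_def by auto
  moreover have "card (?S (\<lambda>p. {v, a} \<notin> snd p) \<union> (?S (\<lambda>p. {v, a} \<in> snd p \<and> {v, b} \<notin> snd p) \<union> subtrees_through))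
      = card (?S (\<lambda>p. {v, a} \<notin> snd p)) + (card (?S (\<lambda>p. {v, a} \<in> snd p \<and> {v, b} \<notin> snd p)) + card subtrees_through)"
    using fin unfolding subtrees_through_def
    by (subst card_Un_disjoint; (subst card_Un_disjoint)?) auto
  ultimately show ?thesis using without_a only_a unfolding num_subtrees_at_def by simp
qed

lemma num_subtrees_decomp:
  "num_subtrees V E = num_subtrees (V - {v}) (del_vertex E v) + card V + (card V - 1) + card subtrees_through"
  using num_subtrees_split_vertex[OF simple, of v] num_subtrees_at_v by simp

lemma triangle_case:
  assumes "{a, b} \<in> E"
  shows "card V = 3" and "card subtrees_through = 1"
proof -
  have tri: "cycle_graph {v, a, b} {{v, a}, {v, b}, {a, b}}"
    using cycle_graph_triangle ab by (metis)
  have "{{v, a}, {v, b}, {a, b}} \<subseteq> E" using va_edge vb_edge assms by auto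
  then have "is_cycle E {{v, a}, {v, b}, {a, b}}"
    using is_cycle_mono[OF cycle_graph_is_cycle[OF tri]] by blast
  then have E: "E = {{v, a}, {v, b}, {a, b}}" using cycle_graph_unique_cycle[OF cycle] by blast
  then have V: "V = {v, a, b}" using cycle_graph_Union[OF cycle] by auto
  then show "card V = 3" using ab by simp
  have path: "is_tree V {{v, a}, {v, b}}" using is_tree_two_edges[of v a b] ab V by simp
  have "subtrees_through = {(V, {{v, a}, {v, b}})}"
  proof (intro set_eqI iffI)
    fix p assume p: "p \<in> subtrees_through"
    obtain W F where pWF: "p = (W, F)" by fastforce
    have WF: "W \<subseteq> V" "F \<subseteq> E" "is_tree W F" "{v, a} \<in> F" "{v, b} \<in> F" "v \<in> W"
      using p pWF unfolding subtrees_through_def subtrees_def by auto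
    have "F \<noteq> E" using WF(2,3) cycle_graph_has_cycle_iff[OF cycle] unfolding is_tree_def by blast
    then have F: "F = {{v, a}, {v, b}}" using WF(2,4,5) E by auto
    have "a \<in> W" "b \<in> W" using is_tree_edge_subset[OF WF(3)] WF(4,5) by auto
    then show "p \<in> {(V, {{v, a}, {v, b}})}" using pWF F WF(1,6) V by auto
  next
    fix p assume "p \<in> {(V, {{v, a}, {v, b}})}"
    then show "p \<in> subtrees_through"
      using path v va_edge vb_edge unfolding subtrees_through_def subtrees_def by auto
  qed
  then show "card subtrees_through = 1" by simp
qed

end

locale cycle_contract = cycle_vertex +
  assumes ab_notin: "{a, b} \<notin> E"
begin

definition contracted_edges :: "'a set set" where
  "contracted_edges = insert {a, b} (del_vertex E v)"

lemma contracted_edges_del: "contracted_edges - {{a, b}} = del_vertex E v"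
  unfolding contracted_edges_def del_vertex_def using ab_notin by auto

lemma redirect_edge:
  assumes "{p, q} \<in> F" "F \<subseteq> E" "F - {{v, a}, {v, b}} \<subseteq> F'" "{a, b} \<in> F'"
  shows "((if p = v then a else p), (if q = v then a else q)) \<in> (adj_rel F')\<^sup>*"
proof (cases "v \<in> {p, q}")
  case True
  then have "{p, q} = {v, a} \<or> {p, q} = {v, b}" using edge_at_v assms(1,2) by blast
  then have "(p = v \<and> q = a) \<or> (p = a \<and> q = v) \<or> (p = v \<and> q = b) \<or> (p = b \<and> q = v)"
    by (auto simp: doubleton_eq_iff)
  moreover have "(a, b) \<in> (adj_rel F')\<^sup>*" "(b, a) \<in> (adj_rel F')\<^sup>*"
    using assms(4) adj_rtrancl_edge by (auto simp: insert_commute)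
  ultimately show ?thesis using ab by auto
next
  case False
  then have "{p, q} \<in> F'" "p \<noteq> v" "q \<noteq> v" using assms(1,3) by auto
  then show ?thesis by (simp add: adj_rtrancl_edge)
qed

lemma connected_graph_contract:
  assumes "connected_graph W F" "a \<in> W" "F \<subseteq> E" "F - {{v, a}, {v, b}} \<subseteq> F'" "{a, b} \<in> F'"
  shows "connected_graph (W - {v}) F'"
  using connected_graph_identify_vertex[OF assms(1,2) ab(2)] redirect_edge[OF _ assms(3-5)] by blast

lemma cycle_graph_contracted: "cycle_graph (V - {v}) contracted_edges"
  unfolding cycle_graph_def
proof (intro conjI ballI)
  show "simple_graph (V - {v}) contracted_edges"
    using simple ab aV bV unfolding simple_graph_def contracted_edges_def del_vertex_def by auto
  have "connected_graph V E" using cycle unfolding cycle_graph_def by simp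
  then show "connected_graph (V - {v}) contracted_edges"
    by (rule connected_graph_contract[OF _ aV]) (use edge_at_v in \<open>auto simp: contracted_edges_def del_vertex_def\<close>)
next
  fix x assume x: "x \<in> V - {v}"
  have fin: "finite E" using cycle_graph_finite_edges[OF cycle] .
  have "{e\<in>E. v \<in> e \<and> x \<in> e} = {e\<in>{{v, a}, {v, b}}. x \<in> e}" using nbrs by blast
  also have "\<dots> = (if x \<in> {a, b} then {{v, x}} else {})" using ab x by auto
  finally have "deg (del_vertex E v) x + (if x \<in> {a, b} then 1 else 0) = 2"
    using deg_del_vertex[OF fin, of v x] cycle_graph_deg[OF cycle] x by auto
  moreover have "{a, b} \<notin> del_vertex E v" "finite (del_vertex E v)"
    using ab_notin fin unfolding del_vertex_def by auto
  ultimately show "deg contracted_edges x = 2"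
    unfolding contracted_edges_def by (simp add: deg_insert)
qed

definition contract :: "'a set \<times> 'a set set \<Rightarrow> 'a set \<times> 'a set set" where
  "contract p = (fst p - {v}, insert {a, b} (snd p - {{v, a}, {v, b}}))"

definition expand :: "'a set \<times> 'a set set \<Rightarrow> 'a set \<times> 'a set set" where
  "expand p = (insert v (fst p), insert {v, a} (insert {v, b} (snd p - {{a, b}})))"

definition subtrees_via_contracted :: "('a set \<times> 'a set set) set" where
  "subtrees_via_contracted = {p\<in>subtrees (V - {v}) contracted_edges. {a, b} \<in> snd p}"

lemma contracted_eq_imp:
  assumes "F \<subseteq> E" "{v, a} \<in> F" "{v, b} \<in> F"
    and eq: "insert {a, b} (F - {{v, a}, {v, b}}) = contracted_edges"
  shows "F = E"
proof -
  have "e \<in> F" if e: "e \<in> E" for e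
  proof (cases "v \<in> e")
    case True
    then show ?thesis using edge_at_v[OF e] assms(2,3) by auto
  next
    case False
    then have "e \<in> insert {a, b} (F - {{v, a}, {v, b}})"
      using e unfolding eq contracted_edges_def del_vertex_def by auto
    moreover have "e \<noteq> {a, b}" using e ab_notin by auto
    ultimately show ?thesis by auto
  qed
  then show ?thesis using assms(1) by blast
qed

lemma expanded_eq_imp:
  assumes "F \<subseteq> contracted_edges" "{a, b} \<in> F"
    and eq: "insert {v, a} (insert {v, b} (F - {{a, b}})) = E"
  shows "F = contracted_edges"
proof -
  have "e \<in> F" if e: "e \<in> contracted_edges" for e
  proof (cases "e = {a, b}")
    case False
    then have "e \<in> E" "v \<notin> e" using e unfolding contracted_edges_def del_vertex_def by auto
    then show ?thesis using False unfolding eq[symmetric] by auto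
  qed (use assms(2) in simp)
  then show ?thesis using assms(1) by blast
qed

lemma contract_mem:
  assumes p: "p \<in> subtrees_through"
  shows "contract p \<in> subtrees_via_contracted"
proof -
  obtain W F where pWF: "p = (W, F)" by fastforce
  have WF: "W \<subseteq> V" "F \<subseteq> E" "is_tree W F" "{v, a} \<in> F" "{v, b} \<in> F" "v \<in> W"
    using p pWF unfolding subtrees_through_def subtrees_def by auto
  define F' where "F' = insert {a, b} (F - {{v, a}, {v, b}})"
  have rest: "v \<notin> e" if "e \<in> F - {{v, a}, {v, b}}" for e
    using that WF(2) edge_at_v by blast
  have aW: "a \<in> W" and bW: "b \<in> W" using is_tree_edge_subset[OF WF(3)] WF(4,5) by auto
  have sub: "F' \<subseteq> contracted_edges"
    unfolding F'_def contracted_edges_def del_vertex_def using WF(2) rest by auto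
  have "simple_graph (W - {v}) F'"
    using WF(3) rest aW bW ab unfolding is_tree_def simple_graph_def F'_def by auto
  moreover have "connected_graph (W - {v}) F'"
    using WF(3) unfolding is_tree_def
    by (intro connected_graph_contract[OF _ aW WF(2)]) (auto simp: F'_def)
  moreover have "\<not> is_cycle F' C" for C
  proof
    assume "is_cycle F' C"
    then have "F' = contracted_edges" using cycle_graph_has_cycle_iff[OF cycle_graph_contracted sub] by blast
    then have "F = E" unfolding F'_def by (rule contracted_eq_imp[OF WF(2,4,5)])
    then show False using cycle_graph_is_cycle[OF cycle] tree_has_no_cycle[OF WF(3)] by simp
  qed
  ultimately have "is_tree (W - {v}) F'" unfolding is_tree_def by blast
  then show ?thesis
    using WF(1) sub unfolding subtrees_via_contracted_def subtrees_def contract_def pWF F'_def by auto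
qed

lemma expand_mem:
  assumes p: "p \<in> subtrees_via_contracted"
  shows "expand p \<in> subtrees_through"
proof -
  obtain W F where pWF: "p = (W, F)" by fastforce
  have WF: "W \<subseteq> V - {v}" "F \<subseteq> contracted_edges" "is_tree W F" "{a, b} \<in> F"
    using p pWF unfolding subtrees_via_contracted_def subtrees_def by auto
  define F' where "F' = insert {v, a} (insert {v, b} (F - {{a, b}}))"
  have aW: "a \<in> W" and bW: "b \<in> W" using is_tree_edge_subset[OF WF(3) WF(4)] by auto
  have sub: "F' \<subseteq> E"
    using WF(2) va_edge vb_edge unfolding F'_def contracted_edges_def del_vertex_def by auto
  have "connected_graph W F" using WF(3) unfolding is_tree_def by blast
  moreover have "F - {{a, b}} \<subseteq> F'" "{a, v} \<in> F'" "{v, b} \<in> F'"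
    unfolding F'_def by (auto simp: insert_commute[of a v "{}"])
  ultimately have "connected_graph W F'" by (rule connected_graph_subdivide_edge)
  then have "connected_graph (insert v W) F'"
    using connected_graph_insert_vertex[OF _ aW \<open>{a, v} \<in> F'\<close>] by blast
  moreover have "simple_graph (insert v W) F'"
    using WF(3) aW bW ab unfolding is_tree_def simple_graph_def F'_def by auto
  moreover have "\<not> is_cycle F' C" for C
  proof
    assume "is_cycle F' C"
    then have "F' = E" using cycle_graph_has_cycle_iff[OF cycle sub] by blast
    then have "F = contracted_edges" unfolding F'_def by (rule expanded_eq_imp[OF WF(2,4)])
    then show False
      using cycle_graph_is_cycle[OF cycle_graph_contracted] tree_has_no_cycle[OF WF(3)] by simp
  qed
  ultimately have "is_tree (insert v W) F'" unfolding is_tree_def by blast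
  then show ?thesis
    using WF(1) sub v unfolding subtrees_through_def subtrees_def expand_def pWF F'_def by auto
qed

lemma expand_contract: "p \<in> subtrees_through \<Longrightarrow> expand (contract p) = p"
proof -
  assume "p \<in> subtrees_through"
  then have "snd p \<subseteq> E" "{v, a} \<in> snd p" "{v, b} \<in> snd p" "v \<in> fst p"
    unfolding subtrees_through_def subtrees_def by auto
  moreover have "{a, b} \<noteq> {v, a}" "{a, b} \<noteq> {v, b}" using ab by (auto simp: doubleton_eq_iff)
  ultimately show ?thesis unfolding expand_def contract_def using ab_notin by (auto simp: prod_eq_iff)
qed

lemma contract_expand: "p \<in> subtrees_via_contracted \<Longrightarrow> contract (expand p) = p"
proof -
  assume "p \<in> subtrees_via_contracted"
  then have "fst p \<subseteq> V - {v}" "snd p \<subseteq> contracted_edges" "{a, b} \<in> snd p"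
    unfolding subtrees_via_contracted_def subtrees_def by auto
  moreover have "{v, a} \<notin> contracted_edges" "{v, b} \<notin> contracted_edges"
    using ab unfolding contracted_edges_def del_vertex_def by (auto simp: doubleton_eq_iff)
  ultimately show ?thesis unfolding expand_def contract_def using vb_ne_va by (auto simp: prod_eq_iff)
qed

lemma num_subtrees_contracted:
  "num_subtrees (V - {v}) contracted_edges = num_subtrees (V - {v}) (del_vertex E v) + card subtrees_through"
proof -
  have "bij_betw contract subtrees_through subtrees_via_contracted"
    by (rule bij_betw_byWitness[of _ expand]) (use expand_contract contract_expand contract_mem expand_mem in auto)
  then have "card subtrees_through = card subtrees_via_contracted" by (rule bij_betw_same_card)
  moreover have "simple_graph (V - {v}) contracted_edges"
    using cycle_graph_contracted unfolding cycle_graph_def by blast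
  ultimately show ?thesis
    using num_subtrees_split_edge[of "V - {v}" contracted_edges "{a, b}"] contracted_edges_del
    unfolding subtrees_via_contracted_def by simp
qed

end

theorem cycle_graph_num_subtrees:
  "cycle_graph V E \<Longrightarrow> card V = k \<Longrightarrow> num_subtrees V E = k * k + 1"
proof (induction k arbitrary: V E)
  case 0
  then show ?case using cycle_graph_finite[OF 0(1)]
    unfolding cycle_graph_def connected_graph_def by auto
next
  case (Suc m)
  have "V \<noteq> {}" using Suc.prems unfolding cycle_graph_def connected_graph_def by auto
  then obtain v where v: "v \<in> V" by auto
  obtain a b where ab: "a \<noteq> b" "a \<noteq> v" "b \<noteq> v" "{e\<in>E. v \<in> e} = {{v, a}, {v, b}}"
    using cycle_graph_neighbours[OF Suc.prems(1) v] by metis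
  interpret cycle_vertex V E v a b using Suc.prems(1) v ab by unfold_locales
  have card: "card (V - {v}) = m" using Suc.prems(2) v by simp
  have decomp: "num_subtrees V E = num_subtrees (V - {v}) (del_vertex E v) + Suc m + m + card subtrees_through"
    using num_subtrees_decomp Suc.prems(2) by simp
  show ?case
  proof (cases "{a, b} \<in> E")
    case True
    then have "Suc m = 3" "card subtrees_through = 1" using triangle_case Suc.prems(2) by auto
    moreover have "2 * num_subtrees (V - {v}) (del_vertex E v) = m * (m + 1) + 2"
      using path_graph_num_subtrees[OF path_del_v card] by simp
    ultimately show ?thesis using decomp by simp
  next
    case False
    interpret cycle_contract V E v a b using False by unfold_locales
    have "num_subtrees (V - {v}) contracted_edges = m * m + 1"
      using Suc.IH[OF cycle_graph_contracted card] .
    then show ?thesis using decomp num_subtrees_contracted by simp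
  qed
qed

theorem cycle_graph_num_subtrees_at:
  assumes cycle: "cycle_graph V E" and x: "x \<in> V"
  shows "2 * num_subtrees_at V E x = card V * card V + card V"
proof -
  obtain a b where ab: "a \<noteq> b" "a \<noteq> x" "b \<noteq> x" "{e\<in>E. x \<in> e} = {{x, a}, {x, b}}"
    using cycle_graph_neighbours[OF cycle x] by metis
  interpret cycle_vertex V E x a b using cycle x ab by unfold_locales
  have "card V \<noteq> 0" using x cycle_graph_finite[OF cycle] by auto
  then obtain j where j: "card V = j + 1" by (metis Suc_eq_plus1 not0_implies_Suc)
  have "card (V - {x}) = j" using j x cycle_graph_finite[OF cycle] by simp
  then have "2 * num_subtrees (V - {x}) (del_vertex E x) = j * (j + 1) + 2"
    using path_graph_num_subtrees[OF path_del_v] by blast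
  moreover have "num_subtrees V E = num_subtrees (V - {x}) (del_vertex E x) + num_subtrees_at V E x"
    using num_subtrees_split_vertex[OF simple] .
  moreover have "num_subtrees V E = card V * card V + 1" using cycle_graph_num_subtrees[OF cycle refl] .
  ultimately show ?thesis using j by (simp add: algebra_simps)
qed

section \<open>Unicyclic graphs\<close>

context
  fixes V :: "'a set" and E :: "'a set set"
  assumes unicyclic: "unicyclic V E"
begin

lemma unicyclic_simple: "simple_graph V E" and unicyclic_connected: "connected_graph V E"
  using unicyclic unfolding unicyclic_def by auto

lemma unicyclic_obtain_cycle:
  obtains C where "is_cycle E C" "\<And>C'. is_cycle E C' \<Longrightarrow> C' = C"
  using unicyclic unfolding unicyclic_def by blast

lemma unicyclic_del_cycle_edge_acyclic:
  assumes "is_cycle E C" "e \<in> C"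
  shows "\<not> is_cycle (E - {e}) C'"
proof
  assume C': "is_cycle (E - {e}) C'"
  obtain C0 where "\<And>C'. is_cycle E C' \<Longrightarrow> C' = C0" using unicyclic_obtain_cycle by blast
  then have "C' = C0" "C = C0" using assms(1) is_cycle_mono[OF C' Diff_subset] by blast+
  then have "C' = C" by simp
  then show False using C' assms(2) unfolding is_cycle_def by auto
qed

lemma unicyclic_card_ge_3: "3 \<le> card V"
proof -
  obtain C where C: "is_cycle E C" using unicyclic_obtain_cycle by blast
  have CE: "C \<subseteq> E" using C unfolding is_cycle_def by simp
  have card_2: "\<forall>f\<in>C. card f = 2" using CE unicyclic_simple unfolding simple_graph_def by auto
  obtain f where "f \<in> C" using C unfolding is_cycle_def by auto
  moreover from this obtain p where "p \<in> f" using card_2 by fastforce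
  ultimately have "deg C p = 2" using C unfolding is_cycle_def deg_def by auto
  moreover have "finite C" using C unfolding is_cycle_def by simp
  ultimately obtain a b where ab: "a \<noteq> b" "a \<noteq> p" "b \<noteq> p" "{e\<in>C. p \<in> e} = {{p, a}, {p, b}}"
    using deg_two_edges[of C p] card_2 by blast
  then have "{p, a} \<in> E" "{p, b} \<in> E" using CE by auto
  then have "{p, a, b} \<subseteq> V" using unicyclic_simple unfolding simple_graph_def by auto
  then have "card {p, a, b} \<le> card V" using unicyclic_simple unfolding simple_graph_def by (simp add: card_mono)
  then show ?thesis using ab by simp
qed

lemma unicyclic_without_leaf:
  assumes no_leaf: "\<forall>x\<in>V. deg E x \<noteq> 1"
  shows "cycle_graph V E"
proof -
  have fin: "finite E" using simple_graph_finite_edges[OF unicyclic_simple] .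
  have finV: "finite V" and edges: "\<forall>f\<in>E. card f = 2 \<and> f \<subseteq> V"
    using unicyclic_simple unfolding simple_graph_def by auto
  have "2 \<le> deg E x" if x: "x \<in> V" for x
  proof -
    have "2 \<le> card V" using unicyclic_card_ge_3 by simp
    then have "1 \<le> deg E x" using connected_graph_deg_ge_1[OF unicyclic_simple unicyclic_connected _ x] by blast
    then show ?thesis using no_leaf x by fastforce
  qed
  moreover have "card E \<le> card V"
  proof -
    obtain C where C: "is_cycle E C" using unicyclic_obtain_cycle by blast
    then obtain e where e: "e \<in> C" "e \<in> E" unfolding is_cycle_def by auto
    show ?thesis
    proof (cases "E - {e} = {}")
      case True
      then have "E = {e}" using e by auto
      then show ?thesis using unicyclic_card_ge_3 by simp
    next
      case False
      have "card (E - {e}) < card (\<Union>(E - {e}))"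
        using card_edges_less_if_acyclic[of "E - {e}"] fin edges False
          unicyclic_del_cycle_edge_acyclic[OF C e(1)] by auto
      moreover have "card (\<Union>(E - {e})) \<le> card V" using edges finV by (intro card_mono) auto
      ultimately show ?thesis using e(2) fin by (simp add: card_Diff_singleton)
    qed
  qed
  ultimately have "\<forall>x\<in>V. deg E x = 2" using deg_two_if_card_edges_le[OF fin finV edges] by blast
  then show ?thesis using unicyclic_simple unicyclic_connected unfolding cycle_graph_def by blast
qed

lemma unicyclic_del_leaf:
  assumes v: "v \<in> V" and u: "u \<in> V" "u \<noteq> v" and leaf: "{e\<in>E. v \<in> e} = {{u, v}}"
  shows "unicyclic (V - {v}) (del_vertex E v)"
proof -
  obtain C where C: "is_cycle E C" and unique: "\<And>C'. is_cycle E C' \<Longrightarrow> C' = C"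
    using unicyclic_obtain_cycle by blast
  have "simple_graph (V - {v}) (del_vertex E v)"
    using unicyclic_simple unfolding simple_graph_def del_vertex_def by auto
  moreover have "connected_graph (V - {v}) (del_vertex E v)"
    using connected_graph_del_leaf[OF unicyclic_connected u] leaf by simp
  moreover have "C \<subseteq> del_vertex E v"
    using is_cycle_avoids_leaf[OF C] leaf C unfolding is_cycle_def del_vertex_def by blast
  then have "is_cycle (del_vertex E v) C" by (rule is_cycle_restrict[OF C])
  moreover have "C' = C" if "is_cycle (del_vertex E v) C'" for C'
    using unique is_cycle_mono[OF that] unfolding del_vertex_def by blast
  ultimately show ?thesis unfolding unicyclic_def by blast
qed

lemma unicyclic_spanning_tree: "\<exists>F\<subseteq>E. is_tree V F"
proof -
  obtain C where C: "is_cycle E C" using unicyclic_obtain_cycle by blast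
  have card_2: "\<forall>f\<in>C. card f = 2"
    using C unicyclic_simple unfolding is_cycle_def simple_graph_def by auto
  obtain e where e: "e \<in> C" using C unfolding is_cycle_def by auto
  then have "card e = 2" using card_2 by blast
  then obtain p q where pq: "p \<noteq> q" "e = {p, q}" by (auto simp: card_2_iff)
  have "connected_graph V (E - {e})"
    using connected_graph_del_cycle_edge[OF unicyclic_connected C card_2] e pq by simp
  moreover have "simple_graph V (E - {e})" using simple_graph_mono[OF unicyclic_simple] by blast
  ultimately have "is_tree V (E - {e})"
    using unicyclic_del_cycle_edge_acyclic[OF C e] unfolding is_tree_def by blast
  then show ?thesis by blast
qed

lemma unicyclic_subtrees_containing:
  assumes "x \<in> V" "y \<in> V"
  shows "1 \<le> card {p\<in>subtrees V E. x \<in> fst p \<and> y \<in> fst p}"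
proof -
  obtain F where "F \<subseteq> E" "is_tree V F" using unicyclic_spanning_tree by blast
  then have "(V, F) \<in> {p\<in>subtrees V E. x \<in> fst p \<and> y \<in> fst p}"
    using assms unfolding subtrees_def by auto
  moreover have "finite {p\<in>subtrees V E. x \<in> fst p \<and> y \<in> fst p}"
    using finite_subtrees[OF unicyclic_simple] by simp
  ultimately show ?thesis by (auto simp: Suc_le_eq card_gt_0_iff)
qed

end

section \<open>Bounds on the number of subtrees\<close>

lemma pow2_Suc_diff_2: "2 \<le> N \<Longrightarrow> (2::nat) ^ (Suc N - 2) = 2 * 2 ^ (N - 2)"
proof -
  assume "2 \<le> N"
  then have "Suc N - 2 = Suc (N - 2)" by arith
  then show ?thesis by simp
qed

lemma two_mul_le_pow2: "3 \<le> N \<Longrightarrow> 2 * N \<le> 3 * 2 ^ (N - 2)"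
proof (induction N rule: nat_induct_at_least)
  case (Suc N)
  then have "2 ^ (Suc N - 2) = 2 * (2::nat) ^ (N - 2)" by (intro pow2_Suc_diff_2) simp
  then show ?case using Suc by simp
qed simp

lemma square_le_pow2: "3 \<le> N \<Longrightarrow> N * N \<le> 3 * 2 ^ (N - 2) + N"
proof (induction N rule: nat_induct_at_least)
  case (Suc N)
  then have "2 ^ (Suc N - 2) = 2 * (2::nat) ^ (N - 2)" by (intro pow2_Suc_diff_2) simp
  then show ?case using Suc two_mul_le_pow2[OF Suc.hyps] by simp
qed simp

lemma square_add_le_pow2: "3 \<le> N \<Longrightarrow> N * N + N \<le> 6 * 2 ^ (N - 2)"
proof (induction N rule: nat_induct_at_least)
  case (Suc N)
  then have "2 ^ (Suc N - 2) = 2 * (2::nat) ^ (N - 2)" by (intro pow2_Suc_diff_2) simp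
  then show ?case using Suc two_mul_le_pow2[OF Suc.hyps] by simp
qed simp

text \<open>The bounds are the values attained by \<open>US\<^sub>N\<close> and \<open>UP\<^sub>N\<close> (at their centre, resp. at the end of
  their pendant path), see \<open>US_num_subtrees\<close> and \<open>UP_num_subtrees\<close> below. The bounds on subtrees
  through a single vertex are needed to carry the induction over leaf deletions.\<close>
definition subtree_bounds :: "nat \<Rightarrow> 'a set \<Rightarrow> 'a set set \<Rightarrow> bool" where
  "subtree_bounds N V E \<longleftrightarrow>
     N * N + 7 * N \<le> 2 * num_subtrees V E + 10 \<and> num_subtrees V E \<le> 3 * 2 ^ (N - 2) + N + 1 \<and>
     (\<forall>x\<in>V. N + 3 \<le> num_subtrees_at V E x \<and> num_subtrees_at V E x \<le> 3 * 2 ^ (N - 2))"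

lemma cycle_graph_subtree_bounds:
  assumes cycle: "cycle_graph V E" and N: "card V = N" "3 \<le> N"
  shows "subtree_bounds N V E"
proof -
  have n: "num_subtrees V E = N * N + 1" using cycle_graph_num_subtrees[OF cycle N(1)] .
  have t: "2 * num_subtrees_at V E x = N * N + N" if "x \<in> V" for x
    using cycle_graph_num_subtrees_at[OF cycle that] N(1) by simp
  obtain j where j: "N = j + 3" using N(2) by (metis add.commute le_Suc_ex)
  have "j \<le> j * j" by (cases j) auto
  then have "N * N + 7 * N \<le> 2 * (N * N + 1) + 10" and "2 * (N + 3) \<le> N * N + N"
    using j by (simp_all add: algebra_simps)
  then show ?thesis
    using n t square_le_pow2[OF N(2)] square_add_le_pow2[OF N(2)]
    unfolding subtree_bounds_def by fastforce
qed

lemma (in graph_leaf) subtree_bounds_del_leaf: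
  assumes unicyclic: "unicyclic (V - {v}) (del_vertex E v)" and M: "card (V - {v}) = M" "3 \<le> M"
    and bounds: "subtree_bounds M (V - {v}) (del_vertex E v)"
  shows "subtree_bounds (Suc M) V E"
proof -
  let ?n = "num_subtrees (V - {v}) (del_vertex E v)"
  let ?t = "num_subtrees_at (V - {v}) (del_vertex E v)"
  have pow: "(2::nat) ^ (Suc M - 2) = 2 * 2 ^ (M - 2)" using M(2) by (intro pow2_Suc_diff_2) simp
  have uH: "u \<in> V - {v}" using u by simp
  have tu: "M + 3 \<le> ?t u" "?t u \<le> 3 * 2 ^ (M - 2)" using bounds uH unfolding subtree_bounds_def by auto
  have n: "M * M + 7 * M \<le> 2 * ?n + 10" "?n \<le> 3 * 2 ^ (M - 2) + M + 1"
    using bounds unfolding subtree_bounds_def by auto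
  have "Suc M * Suc M + 7 * Suc M \<le> 2 * num_subtrees V E + 10"
    "num_subtrees V E \<le> 3 * 2 ^ (Suc M - 2) + Suc M + 1"
    using num_subtrees_del_leaf n tu pow by (simp_all add: algebra_simps)
  moreover have "Suc M + 3 \<le> num_subtrees_at V E x \<and> num_subtrees_at V E x \<le> 3 * 2 ^ (Suc M - 2)"
    if x: "x \<in> V" for x
  proof (cases "x = v")
    case True
    then show ?thesis using num_subtrees_at_leaf tu pow by simp
  next
    case False
    then have xH: "x \<in> V - {v}" using x by simp
    then have "M + 3 \<le> ?t x" "?t x \<le> 3 * 2 ^ (M - 2)" using bounds unfolding subtree_bounds_def by auto
    moreover have "1 \<le> card {p\<in>subtrees (V - {v}) (del_vertex E v). u \<in> fst p \<and> x \<in> fst p}"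
      using unicyclic_subtrees_containing[OF unicyclic uH xH] .
    ultimately show ?thesis
      using num_subtrees_at_del_leaf[OF False] num_subtrees_at_del_leaf_le[OF False] pow by simp
  qed
  ultimately show ?thesis unfolding subtree_bounds_def by blast
qed

theorem unicyclic_subtree_bounds: "unicyclic V E \<Longrightarrow> subtree_bounds (card V) V E"
proof (induction "card V" arbitrary: V E)
  case 0
  then show ?case using unicyclic_card_ge_3 by fastforce
next
  case (Suc M)
  note unicyclic = Suc.prems
  show ?case
  proof (cases "\<exists>v\<in>V. deg E v = 1")
    case False
    then show ?thesis
      using cycle_graph_subtree_bounds[OF unicyclic_without_leaf[OF unicyclic]] unicyclic_card_ge_3[OF unicyclic]
      by blast
  next
    case True
    then obtain v where v: "v \<in> V" "deg E v = 1" by blast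
    obtain u where nbr: "u \<in> V" "u \<noteq> v" "{e\<in>E. v \<in> e} = {{u, v}}"
      using leaf_edge[OF unicyclic_simple[OF unicyclic] v] by blast
    interpret graph_leaf V E u v using unicyclic_simple[OF unicyclic] v nbr by unfold_locales
    have del: "unicyclic (V - {v}) (del_vertex E v)" using unicyclic_del_leaf[OF unicyclic v(1) nbr] .
    have M: "card (V - {v}) = M" using Suc.hyps(2) v by simp
    then have "3 \<le> M" using unicyclic_card_ge_3[OF del] by simp
    moreover have "subtree_bounds M (V - {v}) (del_vertex E v)" using Suc.hyps(1)[OF M[symmetric] del] M by simp
    ultimately show ?thesis using subtree_bounds_del_leaf[OF del M] Suc.hyps(2) by simp
  qed
qed

section \<open>The extremal graphs\<close>

lemma triangle_num_subtrees:
  "num_subtrees {0, 1, 2::nat} {{0, 1}, {0, 2}, {1, 2}} = 10"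
  "x \<in> {0, 1, 2} \<Longrightarrow> num_subtrees_at {0, 1, 2::nat} {{0, 1}, {0, 2}, {1, 2}} x = 6"
proof -
  have tri: "cycle_graph {0, 1, 2::nat} {{0, 1}, {0, 2}, {1, 2}}" by (rule cycle_graph_triangle) auto
  have card: "card {0, 1, 2::nat} = 3" by simp
  show "num_subtrees {0, 1, 2::nat} {{0, 1}, {0, 2}, {1, 2}} = 10"
    using cycle_graph_num_subtrees[OF tri card] by simp
  show "num_subtrees_at {0, 1, 2::nat} {{0, 1}, {0, 2}, {1, 2}} x = 6" if "x \<in> {0, 1, 2}"
    using cycle_graph_num_subtrees_at[OF tri that] card by simp
qed

lemma graph_leaf_insert:
  assumes "simple_graph (insert v V) (insert {u, v} E)" "u \<in> V" "v \<notin> V" "\<forall>e\<in>E. v \<notin> e"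
  shows "graph_leaf (insert v V) (insert {u, v} E) u v" and "del_vertex (insert {u, v} E) v = E"
proof -
  have "{e\<in>insert {u, v} E. v \<in> e} = {{u, v}}" using assms(4) by auto
  then show "graph_leaf (insert v V) (insert {u, v} E) u v"
    using assms(1-3) unfolding graph_leaf_def by auto
  show "del_vertex (insert {u, v} E) v = E" using assms(4) unfolding del_vertex_def by auto
qed

lemma mem_US_E: "e \<in> US_E m \<longleftrightarrow> e = {1, 2} \<or> (\<exists>i. e = {0, i} \<and> 1 \<le> i \<and> i < m)"
  unfolding US_E_def by blast

lemma mem_UP_E:
  "e \<in> UP_E m \<longleftrightarrow> e \<in> {{0, 1}, {1, 2}, {0, 2}} \<or> (\<exists>i. e = {i, i + 1} \<and> 2 \<le> i \<and> i + 1 < m)"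
  unfolding UP_E_def by blast

lemma US_V_Suc: "US_V (Suc m) = insert m (US_V m)" and UP_V_Suc: "UP_V (Suc m) = insert m (UP_V m)"
  unfolding US_V_def UP_V_def by auto

lemma US_simple: "3 \<le> m \<Longrightarrow> simple_graph (US_V m) (US_E m)"
  unfolding simple_graph_def US_V_def US_E_def by auto

lemma UP_simple: "3 \<le> m \<Longrightarrow> simple_graph (UP_V m) (UP_E m)"
  unfolding simple_graph_def UP_V_def UP_E_def by auto

lemma US_E_avoids: "3 \<le> m \<Longrightarrow> \<forall>e\<in>US_E m. m \<notin> e"
  unfolding US_E_def by auto

lemma UP_E_avoids: "3 \<le> m \<Longrightarrow> \<forall>e\<in>UP_E m. m \<notin> e"
  unfolding UP_E_def by auto

lemma US_E_Suc:
  assumes "1 \<le> m"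
  shows "US_E (Suc m) = insert {0, m} (US_E m)"
proof (intro set_eqI iffI)
  fix e assume "e \<in> US_E (Suc m)"
  then consider "e = {1, 2}" | i where "e = {0, i}" "1 \<le> i" "i < Suc m" unfolding mem_US_E by blast
  then show "e \<in> insert {0, m} (US_E m)"
  proof cases
    case (2 i)
    show ?thesis
    proof (cases "i = m")
      case False
      then have "i < m" using 2(3) by simp
      then have "e \<in> US_E m" unfolding mem_US_E using 2(1,2) by blast
      then show ?thesis by blast
    qed (use 2 in simp)
  qed (auto simp: mem_US_E)
next
  fix e assume e: "e \<in> insert {0, m} (US_E m)"
  have "{0, m} \<in> US_E (Suc m)" unfolding mem_US_E using assms by blast
  moreover have "US_E m \<subseteq> US_E (Suc m)" unfolding US_E_def by auto
  ultimately show "e \<in> US_E (Suc m)" using e by blast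
qed

lemma UP_E_Suc:
  assumes "3 \<le> m"
  shows "UP_E (Suc m) = insert {m - 1, m} (UP_E m)"
proof (intro set_eqI iffI)
  fix e assume "e \<in> UP_E (Suc m)"
  then consider "e \<in> {{0, 1}, {1, 2}, {0, 2}}" | i where "e = {i, i + 1}" "2 \<le> i" "i + 1 < Suc m"
    unfolding mem_UP_E by blast
  then show "e \<in> insert {m - 1, m} (UP_E m)"
  proof cases
    case (2 i)
    show ?thesis
    proof (cases "i + 1 = m")
      case True
      then have "e = {m - 1, m}" using 2(1) by (metis add_diff_cancel_right')
      then show ?thesis by blast
    next
      case False
      then have "i + 1 < m" using 2(3) by simp
      then have "e \<in> UP_E m" unfolding mem_UP_E using 2(1,2) by blast
      then show ?thesis by blast
    qed
  qed (auto simp: mem_UP_E)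
next
  fix e assume e: "e \<in> insert {m - 1, m} (UP_E m)"
  have "m - 1 + 1 = m" "2 \<le> m - 1" using assms by auto
  then have "{m - 1, m} \<in> UP_E (Suc m)" unfolding mem_UP_E by (metis lessI)
  moreover have "UP_E m \<subseteq> UP_E (Suc m)" unfolding UP_E_def by auto
  ultimately show "e \<in> UP_E (Suc m)" using e by blast
qed

lemma US_num_subtrees:
  "3 \<le> m \<Longrightarrow> num_subtrees_at (US_V m) (US_E m) 0 = 3 * 2 ^ (m - 2) \<and>
    num_subtrees (US_V m) (US_E m) = 3 * 2 ^ (m - 2) + m + 1"
proof (induction m rule: nat_induct_at_least)
  case base
  have "US_V 3 = {0, 1, 2}" unfolding US_V_def by auto
  moreover have "US_E 3 = {{0, 1}, {0, 2}, {1, 2}}"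
    using US_E_Suc[of 2] US_E_Suc[of 1] unfolding US_E_def by (auto simp: numeral_eq_Suc)
  ultimately show ?case using triangle_num_subtrees by simp
next
  case (Suc m)
  have simple: "simple_graph (insert m (US_V m)) (insert {0, m} (US_E m))"
    using US_simple[of "Suc m"] Suc.hyps US_V_Suc US_E_Suc[of m] by simp
  have "0 \<in> US_V m" "m \<notin> US_V m" using Suc.hyps unfolding US_V_def by auto
  note attached = graph_leaf_insert[OF simple this US_E_avoids[OF Suc.hyps]]
  interpret graph_leaf "insert m (US_V m)" "insert {0, m} (US_E m)" 0 m by (rule attached(1))
  have "num_subtrees_at (US_V (Suc m)) (US_E (Suc m)) 0 = 2 * num_subtrees_at (US_V m) (US_E m) 0"
    using num_subtrees_at_del_leaf[of 0] attached(2) \<open>m \<notin> US_V m\<close> Suc.hyps US_V_Suc US_E_Suc[of m]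
    unfolding num_subtrees_at_def by simp
  moreover have "num_subtrees (US_V (Suc m)) (US_E (Suc m)) =
      num_subtrees (US_V m) (US_E m) + 1 + num_subtrees_at (US_V m) (US_E m) 0"
    using num_subtrees_del_leaf attached(2) \<open>m \<notin> US_V m\<close> Suc.hyps US_V_Suc US_E_Suc[of m] by simp
  moreover have "(2::nat) ^ (Suc m - 2) = 2 * 2 ^ (m - 2)" using Suc.hyps by (intro pow2_Suc_diff_2) simp
  ultimately show ?case using Suc.IH by simp
qed

lemma UP_num_subtrees:
  "3 \<le> m \<Longrightarrow> num_subtrees_at (UP_V m) (UP_E m) (m - 1) = m + 3 \<and>
    2 * num_subtrees (UP_V m) (UP_E m) + 10 = m * m + 7 * m"
proof (induction m rule: nat_induct_at_least)
  case base
  have "UP_V 3 = {0, 1, 2}" unfolding UP_V_def by auto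
  moreover have "{{i, i + 1} | i::nat. 2 \<le> i \<and> i + 1 < 3} = {}" by auto
  then have "UP_E 3 = {{0, 1}, {0, 2}, {1, 2}}" unfolding UP_E_def by auto
  ultimately show ?case using triangle_num_subtrees by simp
next
  case (Suc m)
  have simple: "simple_graph (insert m (UP_V m)) (insert {m - 1, m} (UP_E m))"
    using UP_simple[of "Suc m"] Suc.hyps UP_V_Suc UP_E_Suc[of m] by simp
  have "m - 1 \<in> UP_V m" "m \<notin> UP_V m" using Suc.hyps unfolding UP_V_def by auto
  note attached = graph_leaf_insert[OF simple this UP_E_avoids[OF Suc.hyps]]
  interpret graph_leaf "insert m (UP_V m)" "insert {m - 1, m} (UP_E m)" "m - 1" m by (rule attached(1))
  have "num_subtrees_at (UP_V (Suc m)) (UP_E (Suc m)) m = 1 + num_subtrees_at (UP_V m) (UP_E m) (m - 1)"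
    using num_subtrees_at_leaf attached(2) \<open>m \<notin> UP_V m\<close> Suc.hyps UP_V_Suc UP_E_Suc[of m] by simp
  moreover have "num_subtrees (UP_V (Suc m)) (UP_E (Suc m)) =
      num_subtrees (UP_V m) (UP_E m) + 1 + num_subtrees_at (UP_V m) (UP_E m) (m - 1)"
    using num_subtrees_del_leaf attached(2) \<open>m \<notin> UP_V m\<close> Suc.hyps UP_V_Suc UP_E_Suc[of m] by simp
  ultimately show ?case using Suc.IH by (simp add: algebra_simps)
qed

theorem theorem1:
  fixes V :: "'a set" and E :: "'a set set" and n :: nat
  assumes "n \<ge> 3" and "unicyclic V E" and "card V = n"
  shows "num_subtrees (US_V n) (US_E n) \<ge> num_subtrees V E \<and>
         num_subtrees V E \<ge> num_subtrees (UP_V n) (UP_E n)"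
proof -
  have "subtree_bounds n V E" using unicyclic_subtree_bounds[OF assms(2)] assms(3) by simp
  then have "n * n + 7 * n \<le> 2 * num_subtrees V E + 10" "num_subtrees V E \<le> 3 * 2 ^ (n - 2) + n + 1"
    unfolding subtree_bounds_def by auto
  then show ?thesis using US_num_subtrees[OF assms(1)] UP_num_subtrees[OF assms(1)] by simp
qed

end
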